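(* Let $q\in\mathbb{N}$ and let $T$ be a $q$-frequently hypercyclic operator on a separable complex topological vector space $X$. Then for each $\lambda\in\mathbb{C}$ with $|\lambda|=1$ and each $p\in\mathbb{N}$, the operators $\lambda T$ and $T^p$ are $q$-frequently hypercyclic, and moreover $qFHC(T)=qFHC(\lambda T)=qFHC(T^p)$.
   Context: For $q\in\mathbb{N}$, a continuous linear operator $T$ on a separable topological vector space $X$ is $q$-frequently hypercyclic if there is $x\in X$ (a $q$-frequently hypercyclic vector) such that for every nonempty open $U\subset X$ the set $\{n\in\mathbb{N}:T^nx\in U\}$ has positive $q$-lower density, where $q\text{-}\underline{\mathrm{dens}}(A)=\liminf_{N\to\infty}\frac{\mathrm{card}\{n\in A:n\le N^q\}}{N}$. $qFHC(T)$ denotes the set of all $q$-frequently hypercyclic vectors of $T$. *)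

theory Defs
  imports "HOL-Analysis.Analysis"
begin

definition complex_tvs :: "(complex \<Rightarrow> 'a::{ab_group_add,topological_space} \<Rightarrow> 'a) \<Rightarrow> bool" where
  "complex_tvs sc \<longleftrightarrow> vector_space sc
     \<and> continuous_on UNIV (\<lambda>(x::'a, y::'a). x + y)
     \<and> continuous_on UNIV (\<lambda>(c::complex, x::'a). sc c x)"

definition separable_type :: "'a::topological_space itself \<Rightarrow> bool" where
  "separable_type _ \<longleftrightarrow> (\<exists>D::'a set. countable D \<and> closure D = UNIV)"

definition cont_lin_op :: "(complex \<Rightarrow> 'a::{ab_group_add,topological_space} \<Rightarrow> 'a) \<Rightarrow> ('a \<Rightarrow> 'a) \<Rightarrow> bool" where
  "cont_lin_op sc T \<longleftrightarrow> Vector_Spaces.linear sc sc T \<and> continuous_on UNIV T"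

definition q_lower_dens :: "nat \<Rightarrow> nat set \<Rightarrow> ereal" where
  "q_lower_dens q A = liminf (\<lambda>N::nat. ereal (real (card {n\<in>A. n \<le> N ^ q}) / real N))"

definition qFHC :: "nat \<Rightarrow> ('a::topological_space \<Rightarrow> 'a) \<Rightarrow> 'a set" where
  "qFHC q T = {x. \<forall>U. open U \<and> U \<noteq> {} \<longrightarrow> q_lower_dens q {n. (T ^^ n) x \<in> U} > 0}"

definition q_freq_hypercyclic :: "nat \<Rightarrow> ('a::topological_space \<Rightarrow> 'a) \<Rightarrow> bool" where
  "q_freq_hypercyclic q T \<longleftrightarrow> qFHC q T \<noteq> {}"

end

theory Submission
  imports Defs "HOL-Computational_Algebra.Fundamental_Theorem_Algebra"
begin

(*
  Let T be a continuous linear operator on a complex topological vector space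
  with a vector x of dense orbit, and let |lambda| = 1.  The heart of the proof
  is the statement that the closure Omega of the skew orbit {(T^n x, lambda^n)}
  in X x S^1 contains (x, lambda); then Omega is invariant under rotation of the
  second coordinate by lambda and contains (y, lambda^n) for all y and n.  Its
  proof combines:
    - the density of the range of p(T) for every nonzero polynomial p
      (T - a I has dense range because T has a dense orbit);
    - the classification of closed subsemigroups of the circle (finite groups
      of roots of unity or the whole circle);
    - a winding-number argument with continuous logarithms on a triangle.
  From these "visiting" properties of Omega and a compactness argument, every
  set {n. T^n x \<in> V} of positive q-lower density is transported to the return
  sets of c T and of T^p by maps with bounded fibres and bounded displacement,
  which preserve positive q-lower density.  The converse inclusions are
  elementary: qFHC(T) = qFHC(conj c (c T)), and q-lower density is stable under
  the dilation m \<mapsto> p m.  The theorem follows at the very end.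
*)

section \<open>Complex topological vector spaces\<close>

locale tvs = vector_space sc for sc :: "complex \<Rightarrow> 'a::{ab_group_add,topological_space} \<Rightarrow> 'a" +
  assumes add_cont: "continuous_on UNIV (\<lambda>(x::'a, y::'a). x + y)"
    and sc_cont: "continuous_on UNIV (\<lambda>(c::complex, x::'a). sc c x)"

lemma tvs_of_complex_tvs: "complex_tvs sc \<Longrightarrow> tvs sc"
  unfolding complex_tvs_def tvs_def tvs_axioms_def by auto

context tvs
begin

text \<open>Continuous linear operators, stated pointwise so that the simplifier can use them;
  this is the elementwise content of \<open>cont_lin_op sc\<close>.\<close>

definition cont_linear :: "('a \<Rightarrow> 'a) \<Rightarrow> bool" where
  "cont_linear T \<longleftrightarrow> (\<forall>x y. T (x + y) = T x + T y) \<and> (\<forall>c x. T (sc c x) = sc c (T x))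
     \<and> continuous_on UNIV T"

lemma cont_linear_of_cont_lin_op: "cont_lin_op sc T \<Longrightarrow> cont_linear T"
proof -
  assume "cont_lin_op sc T"
  then have lin: "Vector_Spaces.linear sc sc T" and "continuous_on UNIV T"
    by (simp_all add: cont_lin_op_def)
  interpret L: Vector_Spaces.linear sc sc T by (rule lin)
  show "cont_linear T" using \<open>continuous_on UNIV T\<close> by (simp add: cont_linear_def L.add L.scale)
qed

lemma cont_linear_add: "cont_linear T \<Longrightarrow> T (x + y) = T x + T y"
  by (simp add: cont_linear_def)

lemma cont_linear_sc: "cont_linear T \<Longrightarrow> T (sc c x) = sc c (T x)"
  by (simp add: cont_linear_def)

lemma cont_linear_cont: "cont_linear T \<Longrightarrow> continuous_on S T"
  unfolding cont_linear_def using continuous_on_subset by blast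

lemma cont_linear_zero: "cont_linear T \<Longrightarrow> T 0 = 0"
  using cont_linear_sc[of T 0 0] by simp

lemma cont_linear_diff: "cont_linear T \<Longrightarrow> T (x - y) = T x - T y"
  using cont_linear_add[of T x "- y"] cont_linear_sc[of T "-1" y] by simp

lemma cont_linear_sum: "cont_linear T \<Longrightarrow> T (sum f I) = (\<Sum>i\<in>I. T (f i))"
  by (induction I rule: infinite_finite_induct) (auto simp: cont_linear_zero cont_linear_add)

lemma cont_linear_funpow: "cont_linear T \<Longrightarrow> cont_linear (T ^^ n)"
proof (induction n)
  case 0 then show ?case by (simp add: cont_linear_def continuous_on_id)
next
  case (Suc n)
  then show ?case unfolding cont_linear_def
    by (auto intro: continuous_on_compose2[of UNIV T])
qed

lemma cont_add [continuous_intros]: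
  fixes f g :: "'b::topological_space \<Rightarrow> 'a"
  assumes "continuous_on S f" "continuous_on S g"
  shows "continuous_on S (\<lambda>z. f z + g z)"
proof -
  have "continuous_on S ((\<lambda>(x,y). x+y) \<circ> (\<lambda>z. (f z, g z)))"
    by (rule continuous_on_compose[OF continuous_on_Pair[OF assms] continuous_on_subset[OF add_cont]]) simp
  then show ?thesis by (simp add: o_def)
qed

lemma cont_sc [continuous_intros]:
  fixes f :: "'b::topological_space \<Rightarrow> 'a" and h :: "'b \<Rightarrow> complex"
  assumes "continuous_on S h" "continuous_on S f"
  shows "continuous_on S (\<lambda>z. sc (h z) (f z))"
proof -
  have "continuous_on S ((\<lambda>(c,x). sc c x) \<circ> (\<lambda>z. (h z, f z)))"
    by (rule continuous_on_compose[OF continuous_on_Pair[OF assms] continuous_on_subset[OF sc_cont]]) simp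
  then show ?thesis by (simp add: o_def)
qed

lemma cont_diff [continuous_intros]:
  fixes f g :: "'b::topological_space \<Rightarrow> 'a"
  assumes "continuous_on S f" "continuous_on S g"
  shows "continuous_on S (\<lambda>z. f z - g z)"
proof -
  have "continuous_on S (\<lambda>z. f z + sc (-1) (g z))"
    by (intro cont_add cont_sc continuous_on_const assms)
  then show ?thesis by simp
qed

lemma cont_sum [continuous_intros]:
  fixes f :: "'i \<Rightarrow> 'b::topological_space \<Rightarrow> 'a"
  shows "(\<And>i. i \<in> I \<Longrightarrow> continuous_on S (f i)) \<Longrightarrow> continuous_on S (\<lambda>z. \<Sum>i\<in>I. f i z)"
  by (induction I rule: infinite_finite_induct) (auto intro!: cont_add continuous_on_const)

lemma open_sc_image:
  fixes U :: "'a set"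
  assumes c: "c \<noteq> 0" and U: "open U"
  shows "open (sc c ` U)"
proof -
  have "sc c ` U = sc (inverse c) -` U"
    using c by (auto simp: image_iff) (metis c right_inverse scale_one scale_scale)
  moreover have "continuous_on UNIV (sc (inverse c))"
    by (intro cont_sc continuous_on_const continuous_on_id)
  ultimately show ?thesis using open_vimage[OF U] by simp
qed

lemma open_translate:
  fixes U :: "'a set"
  assumes "open U" shows "open {y. y + a \<in> U}"
proof -
  have "continuous_on UNIV (\<lambda>y. y + a)"
    by (rule cont_add[OF continuous_on_id continuous_on_const])
  from open_vimage[OF assms this] show ?thesis by (simp add: vimage_def)
qed

end

lemma dense_meets: "closure S = UNIV \<Longrightarrow> open U \<Longrightarrow> U \<noteq> {} \<Longrightarrow> S \<inter> U \<noteq> {}"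
  using open_Int_closure_eq_empty[of U S] by auto

lemma dense_range_comp:
  assumes "closure (range f) = UNIV" "closure (range g) = UNIV" "continuous_on UNIV f"
  shows "closure (range (\<lambda>y. f (g y))) = UNIV"
proof -
  have "f ` closure (range g) \<subseteq> closure (f ` range g)"
    by (rule image_closure_subset[OF continuous_on_subset[OF assms(3)]])
       (auto intro: closure_subset[THEN subsetD])
  then have "range f \<subseteq> closure (range (\<lambda>y. f (g y)))" using assms(2) by (simp add: image_image)
  then have "closure (range f) \<subseteq> closure (range (\<lambda>y. f (g y)))"
    by (simp add: closure_minimal)
  then show ?thesis using assms(1) by auto
qed

section \<open>Operators with a dense orbit: \<open>T - a I\<close> has dense range\<close>

context tvs
begin

lemma closure_subspace_sc:
  fixes R :: "'a set"
  assumes R_sc: "\<And>c u. u \<in> R \<Longrightarrow> sc c u \<in> R" and u: "u \<in> closure R"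
  shows "sc c u \<in> closure R"
proof -
  have "sc c ` closure R \<subseteq> closure R"
  proof (rule image_closure_subset)
    show "continuous_on (closure R) (sc c)" by (rule cont_sc[OF continuous_on_const continuous_on_id])
    show "sc c ` R \<subseteq> closure R" using R_sc closure_subset by blast
  qed simp
  then show ?thesis using u by auto
qed

lemma closure_subspace_add:
  fixes R :: "'a set"
  assumes R_add: "\<And>u v. u \<in> R \<Longrightarrow> v \<in> R \<Longrightarrow> u + v \<in> R"
    and u: "u \<in> closure R" and v: "v \<in> closure R"
  shows "u + v \<in> closure R"
proof -
  have add_R: "(\<lambda>y. y + r) ` closure R \<subseteq> closure R" if r: "r \<in> R" for r
  proof (rule image_closure_subset)
    show "continuous_on (closure R) (\<lambda>y. y + r)" by (rule cont_add[OF continuous_on_id continuous_on_const])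
    show "(\<lambda>y. y + r) ` R \<subseteq> closure R" using R_add[OF _ r] closure_subset by blast
  qed simp
  have "(\<lambda>y. u + y) ` closure R \<subseteq> closure R"
  proof (rule image_closure_subset)
    show "continuous_on (closure R) (\<lambda>y. u + y)" by (rule cont_add[OF continuous_on_const continuous_on_id])
    show "(\<lambda>y. u + y) ` R \<subseteq> closure R" using add_R u by blast
  qed simp
  then show ?thesis using v by auto
qed

lemma coefficient_small_near_zero:
  fixes M :: "'a set"
  assumes M_closed: "closed M" and M_sc: "\<And>c u. u \<in> M \<Longrightarrow> sc c u \<in> M"
    and x: "x \<notin> M" and e: "e > 0"
  shows "\<exists>G. open G \<and> 0 \<in> G \<and> (\<forall>t m. m \<in> M \<longrightarrow> sc t x + m \<in> G \<longrightarrow> cmod t < e)"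
proof -
  have "open {y. y + x \<in> - M}" by (rule open_translate) (use M_closed in auto)
  moreover have "0 \<in> {y. y + x \<in> - M}" using x by simp
  ultimately obtain B where B: "open B" "0 \<in> B" "\<And>y. y \<in> B \<Longrightarrow> y + x \<notin> M" by blast
  have "open ((\<lambda>(c, y). sc c y) -` B)" by (rule open_vimage[OF B(1) sc_cont])
  moreover have "(0, 0) \<in> (\<lambda>(c, y). sc c y) -` B" using B(2) by simp
  ultimately obtain C W where CW: "open C" "open W" "(0, 0) \<in> C \<times> W"
    "C \<times> W \<subseteq> (\<lambda>(c, y). sc c y) -` B"
    by (rule open_prod_elim)
  have "0 \<in> C" using CW(3) by simp
  then obtain d where d: "d > 0" "ball 0 d \<subseteq> C" using CW(1) openE by metis
  define r where "r = complex_of_real (e * d / 2)"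
  have r0: "r \<noteq> 0" using e d by (simp add: r_def)
  have cr: "cmod r = e * d / 2" using e d unfolding r_def norm_of_real by simp
  show ?thesis
  proof (intro exI conjI allI impI)
    show "open (sc r ` W)" by (rule open_sc_image[OF r0 CW(2)])
    show "0 \<in> sc r ` W" using CW(3) by (auto intro: image_eqI[of _ _ 0])
    fix t m assume m: "m \<in> M" and tG: "sc t x + m \<in> sc r ` W"
    then obtain w where w: "w \<in> W" "sc t x + m = sc r w" by auto
    show "cmod t < e"
    proof (rule ccontr)
      assume "\<not> cmod t < e"
      then have te: "cmod t \<ge> e" by simp
      then have t0: "t \<noteq> 0" using e by auto
      have "cmod (- r / t) = e * d / 2 / cmod t" by (simp add: norm_divide cr)
      also have "\<dots> \<le> e * d / 2 / e"
      proof -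
        have "0 < cmod t * e" using te e by (intro mult_pos_pos) linarith+
        then show ?thesis using te e d by (intro divide_left_mono) auto
      qed
      also have "\<dots> < d" using e d by simp
      finally have "- r / t \<in> C" using d by auto
      then have "sc (- r / t) w \<in> B" using CW(4) w(1) by auto
      moreover have "sc (- r / t) w = sc (- inverse t) (sc r w)" by (simp add: field_simps)
      also have "\<dots> = sc (- inverse t) (sc t x + m)" by (simp add: w)
      also have "\<dots> = - x - sc (inverse t) m"
        using t0 by (simp add: scale_right_distrib)
      finally have "(- x - sc (inverse t) m) + x \<notin> M" using B(3) by blast
      then show False using M_sc[OF m, of "- inverse t"] by simp
    qed
  qed
qed

lemma powers_avoid_point: "\<exists>c0. \<forall>n. cmod (a ^ n - c0) \<ge> (1::real)"
proof (cases "cmod a \<le> 1")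
  case True
  have "cmod (a ^ n - 3) \<ge> 1" for n
  proof -
    have "cmod (a ^ n) \<le> 1" using True by (simp add: norm_power power_le_one)
    moreover have "cmod (3::complex) \<le> cmod (a ^ n - 3) + cmod (a ^ n)"
      using norm_triangle_ineq[of "3 - a ^ n" "a ^ n"] norm_minus_commute[of "a ^ n" 3] by simp
    ultimately show ?thesis by simp
  qed
  then show ?thesis by blast
next
  case False
  then have "cmod (a ^ n - 0) \<ge> 1" for n by (simp add: norm_power one_le_power)
  then show ?thesis by blast
qed

lemma shift_range_add:
  assumes T: "cont_linear T" and u: "u \<in> range (\<lambda>y. T y - sc a y)" and v: "v \<in> range (\<lambda>y. T y - sc a y)"
  shows "u + v \<in> range (\<lambda>y. T y - sc a y)"
proof -
  obtain y z where "u = T y - sc a y" "v = T z - sc a z" using u v by blast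
  then have "u + v = T (y + z) - sc a (y + z)"
    using T by (simp add: cont_linear_add scale_right_distrib)
  then show ?thesis by blast
qed

lemma shift_range_sc:
  assumes T: "cont_linear T" and u: "u \<in> range (\<lambda>y. T y - sc a y)"
  shows "sc c u \<in> range (\<lambda>y. T y - sc a y)"
proof -
  obtain y where "u = T y - sc a y" using u by auto
  then have "sc c u = T (sc c y) - sc a (sc c y)"
    using T by (simp add: cont_linear_sc scale_right_diff_distrib mult.commute)
  then show ?thesis by blast
qed

lemma shift_range_orbit:
  assumes T: "cont_linear T"
  shows "(T ^^ n) x - sc (a ^ n) x \<in> range (\<lambda>y. T y - sc a y)"
proof (induction n)
  case 0
  have "T 0 - sc a 0 \<in> range (\<lambda>y. T y - sc a y)" by (rule rangeI)
  then show ?case using T by (simp add: cont_linear_zero)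
next
  case (Suc n)
  have "T ((T ^^ n) x - sc (a ^ n) x) \<in> range (\<lambda>y. T y - sc a y)"
  proof -
    obtain y where "(T ^^ n) x - sc (a ^ n) x = T y - sc a y" using Suc by auto
    then have "T ((T ^^ n) x - sc (a ^ n) x) = T (T y) - sc a (T y)"
      using T by (simp add: cont_linear_diff cont_linear_sc)
    then show ?thesis by blast
  qed
  moreover have "(T ^^ Suc n) x - sc (a ^ Suc n) x
      = T ((T ^^ n) x - sc (a ^ n) x) + sc (a ^ n) (T x - sc a x)"
    using T by (simp add: cont_linear_diff cont_linear_sc scale_right_diff_distrib mult.commute)
  ultimately show ?case using shift_range_add[OF T] shift_range_sc[OF T] by auto
qed

text \<open>Let \<open>M\<close> be the closure of the range.  If \<open>x \<in> M\<close>, the whole orbit lies in \<open>M\<close>.  Otherwise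
  \<open>T\<^sup>n x - c\<^sub>0 x = (a\<^sup>n - c\<^sub>0) x + (T\<^sup>n x - a\<^sup>n x)\<close> with \<open>|a\<^sup>n - c\<^sub>0| \<ge> 1\<close> stays away from \<open>0\<close>,
  so the orbit misses a neighbourhood of \<open>c\<^sub>0 x\<close>.\<close>

lemma dense_range_shift:
  assumes T: "cont_linear T" and dense: "closure (range (\<lambda>n. (T ^^ n) x)) = UNIV"
  shows "closure (range (\<lambda>y. T y - sc a y)) = UNIV"
proof (rule ccontr)
  let ?R = "range (\<lambda>y. T y - sc a y)"
  let ?M = "closure ?R"
  assume not_dense: "?M \<noteq> UNIV"
  note R_add = shift_range_add[OF T] and R_sc = shift_range_sc[OF T]
  have orbit_M: "(T ^^ n) x - sc (a ^ n) x \<in> ?M" for n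
    using closure_subset shift_range_orbit[OF T] by blast
  show False
  proof (cases "x \<in> ?M")
    case True
    have "(T ^^ n) x \<in> ?M" for n
      using closure_subspace_add[OF R_add closure_subspace_sc[OF R_sc True] orbit_M[of n], of "a ^ n"]
      by simp
    then have "range (\<lambda>n. (T ^^ n) x) \<subseteq> ?M" by auto
    then have "closure (range (\<lambda>n. (T ^^ n) x)) \<subseteq> ?M" by (simp add: closure_minimal)
    then show False using dense not_dense by auto
  next
    case False
    obtain G where G: "open G" "0 \<in> G" "\<And>t m. m \<in> ?M \<Longrightarrow> sc t x + m \<in> G \<Longrightarrow> cmod t < 1"
      using coefficient_small_near_zero[OF closed_closure closure_subspace_sc[OF R_sc] False, of 1]
      by auto
    obtain c0 where c0: "\<And>n. cmod (a ^ n - c0) \<ge> 1" using powers_avoid_point by blast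
    have "open {y. y + (- sc c0 x) \<in> G}" by (rule open_translate[OF G(1)])
    moreover have "sc c0 x \<in> {y. y + (- sc c0 x) \<in> G}" using G(2) by simp
    ultimately obtain n where n: "(T ^^ n) x + (- sc c0 x) \<in> G"
      using dense_meets[OF dense] by blast
    have "(T ^^ n) x + (- sc c0 x) = sc (a ^ n - c0) x + ((T ^^ n) x - sc (a ^ n) x)"
      by (simp add: scale_left_diff_distrib)
    then have "cmod (a ^ n - c0) < 1" using G(3)[OF orbit_M] n by metis
    then show False using c0[of n] by simp
  qed
qed

end

section \<open>Polynomials in the operator have dense range\<close>

context tvs
begin

definition poly_op :: "('a \<Rightarrow> 'a) \<Rightarrow> complex poly \<Rightarrow> 'a \<Rightarrow> 'a" where
  "poly_op T p y = (\<Sum>i\<le>degree p. sc (coeff p i) ((T ^^ i) y))"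

lemma poly_op_upto:
  assumes "degree p \<le> N"
  shows "poly_op T p y = (\<Sum>i\<le>N. sc (coeff p i) ((T ^^ i) y))"
  unfolding poly_op_def
  by (rule sum.mono_neutral_left) (use assms in \<open>auto simp: coeff_eq_0\<close>)

lemma poly_op_add: "poly_op T (p + q) y = poly_op T p y + poly_op T q y"
proof -
  define N where "N = max (degree p) (degree q)"
  have "degree (p + q) \<le> N" unfolding N_def by (rule degree_add_le) auto
  then have "poly_op T (p + q) y = (\<Sum>i\<le>N. sc (coeff (p + q) i) ((T ^^ i) y))"
    by (rule poly_op_upto)
  also have "\<dots> = (\<Sum>i\<le>N. sc (coeff p i) ((T ^^ i) y)) + (\<Sum>i\<le>N. sc (coeff q i) ((T ^^ i) y))"
    by (simp add: scale_left_distrib sum.distrib)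
  also have "\<dots> = poly_op T p y + poly_op T q y"
    using poly_op_upto[of p N T y] poly_op_upto[of q N T y] by (simp add: N_def)
  finally show ?thesis .
qed

lemma poly_op_monom: "poly_op T (monom a n) y = sc a ((T ^^ n) y)"
proof -
  have "poly_op T (monom a n) y = (\<Sum>i\<le>n. sc (coeff (monom a n) i) ((T ^^ i) y))"
    by (rule poly_op_upto) (simp add: degree_monom_le)
  also have "\<dots> = sc a ((T ^^ n) y)"
    by (subst sum.remove[of _ n]) (auto simp: coeff_monom intro!: sum.neutral)
  finally show ?thesis .
qed

lemma poly_op_linear_factor:
  assumes T: "cont_linear T"
  shows "poly_op T ([:-a, 1:] * p) y = T (poly_op T p y) - sc a (poly_op T p y)"
proof -
  define d where "d = degree p"
  have deg: "degree ([:-a, 1:] * p) \<le> Suc d"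
    using degree_mult_le[of "[:-a, 1:]" p] by (simp add: d_def)
  have co: "coeff ([:-a, 1:] * p) i = (if i = 0 then 0 else coeff p (i - 1)) - a * coeff p i" for i
    by (simp add: coeff_pCons')
  have "poly_op T ([:-a, 1:] * p) y = (\<Sum>i\<le>Suc d. sc (coeff ([:-a, 1:] * p) i) ((T ^^ i) y))"
    by (rule poly_op_upto[OF deg])
  also have "\<dots> = (\<Sum>i\<le>Suc d. sc (if i = 0 then 0 else coeff p (i - 1)) ((T ^^ i) y))
                 - (\<Sum>i\<le>Suc d. sc (a * coeff p i) ((T ^^ i) y))"
    unfolding co scale_left_diff_distrib by (rule sum_subtractf)
  also have "(\<Sum>i\<le>Suc d. sc (if i = 0 then 0 else coeff p (i - 1)) ((T ^^ i) y))
      = (\<Sum>i\<le>d. sc (coeff p i) (T ((T ^^ i) y)))"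
    by (subst sum.atMost_Suc_shift) simp
  also have "\<dots> = T (poly_op T p y)"
    unfolding poly_op_def d_def using T by (simp add: cont_linear_sum cont_linear_sc)
  also have "(\<Sum>i\<le>Suc d. sc (a * coeff p i) ((T ^^ i) y)) = sc a (poly_op T p y)"
  proof -
    have "poly_op T p y = (\<Sum>i\<le>Suc d. sc (coeff p i) ((T ^^ i) y))"
      by (rule poly_op_upto) (simp add: d_def)
    show ?thesis unfolding \<open>poly_op T p y = _\<close> scale_sum_right scale_scale by (rule refl)
  qed
  finally show ?thesis .
qed

lemma cont_linear_poly_op:
  assumes T: "cont_linear T"
  shows "cont_linear (poly_op T p)"
proof -
  have Ti: "cont_linear (T ^^ i)" for i by (rule cont_linear_funpow[OF T])
  have "poly_op T p (x + y) = poly_op T p x + poly_op T p y" for x y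
    unfolding poly_op_def using Ti by (simp add: cont_linear_add scale_right_distrib sum.distrib)
  moreover have "poly_op T p (sc c x) = sc c (poly_op T p x)" for c x
    unfolding poly_op_def using Ti by (simp add: cont_linear_sc scale_sum_right mult.commute)
  moreover have "continuous_on UNIV (poly_op T p)"
    unfolding poly_op_def by (intro cont_sum cont_sc continuous_on_const cont_linear_cont[OF Ti])
  ultimately show ?thesis by (simp add: cont_linear_def)
qed

lemma poly_op_funpow:
  assumes T: "cont_linear T"
  shows "poly_op T p ((T ^^ n) y) = (T ^^ n) (poly_op T p y)"
proof -
  have "poly_op T p (T z) = T (poly_op T p z)" for z
    unfolding poly_op_def using T by (simp add: cont_linear_sum cont_linear_sc funpow_swap1)
  then show ?thesis by (induction n) auto
qed

text \<open>If \<open>T\<close> has a dense orbit, every nonzero polynomial in \<open>T\<close> has dense range: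
  factor \<open>p\<close> into linear factors (fundamental theorem of algebra) and compose the
  dense-range maps \<open>T - a I\<close>.\<close>

lemma poly_op_dense_range:
  assumes T: "cont_linear T" and dense: "closure (range (\<lambda>n. (T ^^ n) x)) = UNIV"
    and p: "p \<noteq> 0"
  shows "closure (range (poly_op T p)) = UNIV"
  using p
proof (induction "degree p" arbitrary: p rule: less_induct)
  case less
  show ?case
  proof (cases "degree p = 0")
    case True
    define c where "c = coeff p 0"
    have c0: "c \<noteq> 0" using less.prems True leading_coeff_neq_0[of p] by (simp add: c_def)
    have "poly_op T p y = sc c y" for y unfolding poly_op_def c_def using True by simp
    then have "range (poly_op T p) = UNIV"
      using c0 by (auto simp: image_iff intro!: exI[of _ "sc (inverse c) _"])
    then show ?thesis by simp
  next
    case False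
    then have "\<not> constant (poly p)" by (simp add: constant_degree)
    then obtain z where "poly p z = 0" using fundamental_theorem_of_algebra by blast
    then have "[:- z, 1:] dvd p" using dvd_iff_poly_eq_0[of "-z" p] by simp
    then obtain q where pq: "p = [:- z, 1:] * q" by (elim dvdE)
    have q0: "q \<noteq> 0" using less.prems pq by auto
    have "degree ([:-z,1:] * q) = degree [:-z,1:] + degree q" by (rule degree_mult_eq) (auto simp: q0)
    then have "degree p = 1 + degree q" using pq by simp
    then have IH: "closure (range (poly_op T q)) = UNIV" using less.hyps q0 by simp
    have eq: "poly_op T p = (\<lambda>y. (\<lambda>u. T u - sc z u) (poly_op T q y))"
      using pq poly_op_linear_factor[OF T] by auto
    show ?thesis unfolding eq
    proof (rule dense_range_comp[OF dense_range_shift[OF T dense] IH])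
      show "continuous_on UNIV (\<lambda>u. T u - sc z u)"
        by (intro cont_diff cont_linear_cont[OF T] cont_sc continuous_on_const continuous_on_id)
    qed
  qed
qed

end

section \<open>Closed subsemigroups of the unit circle\<close>

lemma cis_dist_le: "cmod (cis a - cis b) \<le> \<bar>a - b\<bar>"
proof -
  have cis_minus_one: "cmod (cis t - 1) \<le> \<bar>t\<bar>" for t
  proof -
    have "(cmod (cis t - 1))\<^sup>2 = (cos t - 1)\<^sup>2 + (sin t)\<^sup>2"
      by (simp add: cmod_power2 cis.ctr)
    also have "\<dots> = 4 * (sin (t / 2))\<^sup>2"
      using sin_cos_squared_add[of t] cos_double_sin[of "t/2"]
      by (simp add: power2_eq_square algebra_simps)
    also have "\<dots> \<le> 4 * (t / 2)\<^sup>2"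
      using abs_sin_x_le_abs_x[of "t/2"]
      by (intro mult_left_mono) (auto intro: power_mono simp flip: abs_le_square_iff)
    also have "\<dots> = \<bar>t\<bar>\<^sup>2" by (simp add: power2_eq_square)
    finally show ?thesis by (rule power2_le_imp_le) simp
  qed
  have "cis a - cis b = cis b * (cis (a - b) - 1)"
    by (simp add: algebra_simps cis_mult)
  then have "cmod (cis a - cis b) = cmod (cis (a - b) - 1)" by (simp add: norm_mult)
  then show ?thesis using cis_minus_one by simp
qed

lemma unit_eq_cis_Arg: assumes "cmod z = 1" shows "cis (Arg z) = z"
proof -
  have "z \<noteq> 0" using assms by auto
  then have "cis (Arg z) = sgn z" by (rule cis_Arg)
  also have "sgn z = z / of_real (cmod z)"
    by (simp add: sgn_div_norm scaleR_conv_of_real divide_inverse mult.commute)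
  finally show ?thesis using assms by simp
qed

text \<open>Such a set is a closed subgroup, and either it is the whole circle or it is the
  finite group of \<open>k\<close>-th roots of unity for some \<open>k \<ge> 1\<close>.\<close>

locale circle_monoid =
  fixes H :: "complex set"
  assumes closed_H: "closed H" and H_circle: "H \<subseteq> sphere 0 1" and one_H: "1 \<in> H"
    and mult_H: "\<And>a b. a \<in> H \<Longrightarrow> b \<in> H \<Longrightarrow> a * b \<in> H"
begin

lemma power_H: "a \<in> H \<Longrightarrow> a ^ n \<in> H"
  by (induction n) (auto simp: one_H mult_H)

lemma norm_H: "a \<in> H \<Longrightarrow> cmod a = 1"
  using H_circle by auto

text \<open>Inverses are limits of powers, since the powers of a unimodular number
  accumulate (compactness of the circle).\<close>

lemma inverse_H:
  assumes a: "a \<in> H"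
  shows "inverse a \<in> H"
proof -
  have an: "cmod a = 1" using norm_H a by simp
  have "inverse a \<in> closure H"
    unfolding closure_approachable
  proof (intro allI impI)
    fix e :: real assume e: "e > 0"
    have "\<forall>n. a ^ n \<in> sphere (0::complex) 1" using an by (simp add: norm_power)
    then obtain l r where r: "strict_mono r" "((\<lambda>n. a ^ n) \<circ> r) \<longlonglongrightarrow> l"
      using compact_imp_seq_compact[OF compact_sphere] seq_compactE by metis
    have "Cauchy ((\<lambda>n. a ^ n) \<circ> r)" using r(2) by (rule LIMSEQ_imp_Cauchy)
    then obtain N where N: "\<And>m n. m \<ge> N \<Longrightarrow> n \<ge> N \<Longrightarrow> dist (a ^ r m) (a ^ r n) < e"
      using e unfolding Cauchy_def o_def by meson
    have lt: "r N < r (Suc N)" using r(1) by (simp add: strict_mono_def)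
    define j where "j = r (Suc N) - r N - 1"
    have rs: "r (Suc N) = r N + 1 + j" using lt by (simp add: j_def)
    have "a ^ r (Suc N) - a ^ r N = a ^ (r N + 1) * (a ^ j - inverse a)"
      using an by (auto simp: rs power_add field_simps)
    then have "cmod (a ^ r (Suc N) - a ^ r N) = cmod (a ^ j - inverse a)"
      using an by (simp add: norm_mult norm_power)
    moreover have "dist (a ^ r (Suc N)) (a ^ r N) < e" using N by simp
    ultimately have "dist (a ^ j) (inverse a) < e" by (simp add: dist_norm)
    then show "\<exists>y\<in>H. dist y (inverse a) < e" using power_H[OF a] by blast
  qed
  then show ?thesis using closed_H by (simp add: closure_closed)
qed

text \<open>An infinite \<open>H\<close> contains rotations by arbitrarily small positive angles: two
  nearby angles of elements of \<open>H\<close> give their quotient.\<close>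

lemma small_rotation_H:
  assumes inf: "infinite H" and e: "e > 0"
  shows "\<exists>d. cis d \<in> H \<and> 0 < d \<and> d < e"
proof -
  define A where "A = {t \<in> {-pi..pi}. cis t \<in> H}"
  have "H \<subseteq> cis ` A"
  proof
    fix w assume w: "w \<in> H"
    then have "cis (Arg w) = w" using norm_H unit_eq_cis_Arg by blast
    moreover have "Arg w \<in> {-pi..pi}" using Arg_bounded[of w] by auto
    ultimately show "w \<in> cis ` A" using w unfolding A_def by force
  qed
  then have "infinite A" using inf finite_surj by blast
  moreover have "A \<subseteq> {-pi..pi}" by (auto simp: A_def)
  ultimately obtain t0 where t0: "t0 islimpt A"
    using compact_eq_Bolzano_Weierstrass[THEN iffD1, OF compact_Icc, rule_format, of A] by blast
  obtain t1 where t1: "t1 \<in> A" "t1 \<noteq> t0" "dist t1 t0 < e / 2"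
    using t0 e unfolding islimpt_approachable by (meson half_gt_zero)
  have "dist t1 t0 > 0" using t1 by simp
  then obtain t2 where t2: "t2 \<in> A" "t2 \<noteq> t0" "dist t2 t0 < min (e/2) (dist t1 t0)"
    using t0 e unfolding islimpt_approachable by (meson half_gt_zero min_less_iff_conj)
  have ne: "t1 \<noteq> t2" using t2 by auto
  have "\<bar>t1 - t0\<bar> < e/2" "\<bar>t2 - t0\<bar> < e/2" using t1(3) t2(3) by (simp_all add: dist_real_def)
  then have close: "\<bar>t1 - t2\<bar> < e" by arith
  have h: "cis t1 \<in> H" "cis t2 \<in> H" using t1 t2 by (auto simp: A_def)
  have "cis (t1 - t2) \<in> H" "cis (t2 - t1) \<in> H"
    using mult_H[OF h(1) inverse_H[OF h(2)]] mult_H[OF h(2) inverse_H[OF h(1)]]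
    by (simp_all add: cis_divide[symmetric] divide_inverse)
  then show ?thesis using close ne
    by (cases "t1 > t2") (auto intro: exI[of _ "t1 - t2"] exI[of _ "t2 - t1"])
qed

text \<open>An infinite \<open>H\<close> is the whole circle: the multiples of a small angle in \<open>H\<close>
  approximate every angle.\<close>

lemma infinite_H_full:
  assumes inf: "infinite H" and z: "cmod z = 1"
  shows "z \<in> H"
proof -
  have "z \<in> closure H"
    unfolding closure_approachable
  proof (intro allI impI)
    fix e :: real assume e: "e > 0"
    obtain d where d: "cis d \<in> H" "0 < d" "d < e" using small_rotation_H[OF inf e] by blast
    define b where "b = Arg z + 2 * pi"
    have b0: "b \<ge> 0" using Arg_bounded[of z] by (simp add: b_def)
    have cb: "cis b = z" using unit_eq_cis_Arg[OF z] by (simp add: b_def cis_mult[symmetric])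
    define m where "m = nat \<lfloor>b / d\<rfloor>"
    have "real m \<le> b / d" "b / d < real m + 1" using b0 d by (simp_all add: m_def)
    then have m: "real m * d \<le> b" "b < real m * d + d" using d by (simp_all add: field_simps)
    have "cis d ^ m \<in> H" by (rule power_H[OF d(1)])
    moreover have "cis d ^ m = cis (real m * d)" by (rule Complex.DeMoivre)
    moreover have "dist (cis (real m * d)) z < e"
    proof -
      have "dist (cis (real m * d)) z = cmod (cis (real m * d) - cis b)" by (simp add: dist_norm cb)
      also have "\<dots> \<le> \<bar>real m * d - b\<bar>" by (rule cis_dist_le)
      also have "\<dots> < e" using m d by simp
      finally show ?thesis .
    qed
    ultimately show "\<exists>y\<in>H. dist y z < e" by metis
  qed
  then show ?thesis using closed_H by (simp add: closure_closed)
qed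

text \<open>A finite \<open>H\<close> is a finite group, so its elements are \<open>card H\<close>-th roots of unity.\<close>

lemma finite_H_roots:
  assumes fin: "finite H" and w: "w \<in> H"
  shows "w ^ card H = 1"
proof -
  have inj: "inj_on (\<lambda>g. w * g) H"
    using norm_H[OF w] by (auto simp: inj_on_def)
  have img: "(\<lambda>g. w * g) ` H = H"
  proof (rule card_subset_eq[OF fin])
    show "(\<lambda>g. w * g) ` H \<subseteq> H" using mult_H w by auto
    show "card ((\<lambda>g. w * g) ` H) = card H" using card_image[OF inj] .
  qed
  have "prod (\<lambda>g. g) H = prod (\<lambda>g. g) ((\<lambda>g. w * g) ` H)" using img by simp
  also have "\<dots> = prod (\<lambda>g. w * g) H" using prod.reindex[OF inj] by simp
  also have "\<dots> = w ^ card H * prod (\<lambda>g. g) H" by (simp add: prod.distrib)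
  finally have "w ^ card H * prod (\<lambda>g. g) H = 1 * prod (\<lambda>g. g) H" by simp
  moreover have "prod (\<lambda>g. g) H \<noteq> 0"
    using fin norm_H by (force simp: prod_zero_iff)
  ultimately show "w ^ card H = 1" by (metis mult_right_cancel)
qed

text \<open>A unimodular \<open>l \<notin> H\<close> is separated from \<open>H\<close> by a power map: \<open>H\<close> is then the
  group of \<open>k\<close>-th roots of unity for \<open>k = card H\<close>, so \<open>l\<^sup>k \<noteq> 1\<close>.\<close>

lemma separating_root_order:
  assumes l: "cmod l = 1" and lH: "l \<notin> H"
  shows "\<exists>k\<ge>1. (\<forall>w\<in>H. w ^ k = 1) \<and> l ^ k \<noteq> 1"
proof -
  have fin: "finite H" using infinite_H_full l lH by blast
  define k where "k = card H"
  have k1: "k \<ge> 1" using fin one_H by (auto simp: k_def card_gt_0_iff Suc_le_eq)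
  have roots: "\<forall>w\<in>H. w ^ k = 1" using finite_H_roots[OF fin] by (simp add: k_def)
  then have sub: "H \<subseteq> {z. z ^ k = 1}" by auto
  have finr: "finite {z::complex. z ^ k = 1}" using k1 by (intro finite_roots_unity) auto
  have "card {z::complex. z ^ k = 1} \<le> k" using k1 by (intro card_roots_unity) auto
  then have "H = {z. z ^ k = 1}"
    using card_subset_eq[OF finr sub] card_mono[OF finr sub] by (simp add: k_def)
  then have "l ^ k \<noteq> 1" using lH by auto
  then show ?thesis using k1 roots by blast
qed

end

section \<open>Increments of continuous logarithms\<close>

text \<open>Two continuous logarithms of the same function on a connected set differ by a
  constant in \<open>2\<pi>i\<int>\<close>, so their increments agree.\<close>

lemma log_lift_unique:
  fixes g1 g2 :: "'a::topological_space \<Rightarrow> complex"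
  assumes S: "connected S" and c1: "continuous_on S g1" and c2: "continuous_on S g2"
    and e: "\<And>t. t \<in> S \<Longrightarrow> exp (g1 t) = exp (g2 t)" and a: "a \<in> S" and b: "b \<in> S"
  shows "g1 b - g1 a = g2 b - g2 a"
proof -
  define h where "h t = g1 t - g2 t" for t
  have ch: "continuous_on S h" unfolding h_def by (intro continuous_intros c1 c2)
  have int: "\<exists>n::int. h t = of_int (2 * n) * pi * \<i>" if t: "t \<in> S" for t
    using e[OF t] unfolding exp_eq h_def by (auto simp: algebra_simps)
  have "h constant_on S"
  proof (rule continuous_discrete_range_constant[OF S ch])
    fix u assume u: "u \<in> S"
    show "\<exists>e>0. \<forall>y. y \<in> S \<and> h y \<noteq> h u \<longrightarrow> e \<le> norm (h y - h u)"
    proof (intro exI[of _ 1] conjI allI impI)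
      fix y assume y: "y \<in> S \<and> h y \<noteq> h u"
      obtain m n :: int where mn: "h y = of_int (2 * m) * pi * \<i>" "h u = of_int (2 * n) * pi * \<i>"
        using int u y by blast
      have "m \<noteq> n" using y mn by auto
      then have "\<bar>real_of_int (m - n)\<bar> \<ge> 1" by linarith
      have eq: "h y - h u = complex_of_real (2 * pi * real_of_int (m - n)) * \<i>"
        using mn by (simp add: algebra_simps)
      have "norm (h y - h u) = 2 * pi * \<bar>real_of_int (m - n)\<bar>"
        unfolding eq norm_mult norm_of_real by (simp add: abs_mult)
      also have "\<dots> \<ge> 2 * pi * 1" using \<open>\<bar>real_of_int (m - n)\<bar> \<ge> 1\<close> by (intro mult_left_mono) auto
      finally show "1 \<le> norm (h y - h u)" using pi_gt3 by linarith
    qed simp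
  qed
  then have "h a = h b" using a b by (auto simp: constant_on_def)
  then show ?thesis by (simp add: h_def algebra_simps)
qed

text \<open>The increment \<open>g(1) - g(0)\<close> of a continuous logarithm \<open>g\<close> of a path \<open>f\<close> on \<open>[0,1]\<close>
  (the winding of \<open>f\<close> around \<open>0\<close>, times \<open>2\<pi>i\<close>); well defined by the previous lemma.\<close>

definition log_incr :: "(real \<Rightarrow> complex) \<Rightarrow> complex" where
  "log_incr f = (let g = (SOME g. continuous_on {0..1} g \<and> (\<forall>t\<in>{0..1}. f t = exp (g t))) in g 1 - g 0)"

lemma log_incr_eq:
  assumes g: "continuous_on {0..1} g" "\<And>t. t \<in> {0..1} \<Longrightarrow> f t = exp (g t)"
  shows "log_incr f = g 1 - g 0"
proof -
  define g' where "g' = (SOME g. continuous_on {0..1} g \<and> (\<forall>t\<in>{0..1}. f t = exp (g t)))"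
  have "continuous_on {0..1} g' \<and> (\<forall>t\<in>{0..1}. f t = exp (g' t))"
    unfolding g'_def by (rule someI[of _ g]) (use g in auto)
  then have "g' 1 - g' 0 = g 1 - g 0"
    by (intro log_lift_unique[of "{0..1::real}"]) (auto simp: g)
  then show ?thesis by (simp add: log_incr_def g'_def Let_def)
qed

lemma continuous_log_exists:
  fixes f :: "'a::real_normed_vector \<Rightarrow> complex"
  assumes "convex S" "continuous_on S f" "\<And>t. t \<in> S \<Longrightarrow> f t \<noteq> 0"
  obtains g where "continuous_on S g" "\<And>t. t \<in> S \<Longrightarrow> f t = exp (g t)"
  using continuous_logarithm_on_contractible[OF assms(2) convex_imp_contractible[OF assms(1)] assms(3)]
  by metis

lemma log_incr_exp:
  assumes "continuous_on {0..1} f" "\<And>t. t \<in> {0..1} \<Longrightarrow> f t \<noteq> 0"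
  shows "exp (log_incr f) = f 1 / f 0"
proof -
  obtain g where g: "continuous_on {0..1} g" "\<And>t. t \<in> {0..1} \<Longrightarrow> f t = exp (g t)"
    using continuous_log_exists[of "{0..1::real}" f] assms by auto
  show ?thesis using log_incr_eq[OF g] g(2)[of 0] g(2)[of 1] by (simp add: exp_diff)
qed

lemma log_incr_cmult:
  assumes "continuous_on {0..1} f" "\<And>t. t \<in> {0..1} \<Longrightarrow> f t \<noteq> 0" "c \<noteq> 0"
    and "\<And>t. t \<in> {0..1} \<Longrightarrow> f2 t = c * f t"
  shows "log_incr f2 = log_incr f"
proof -
  obtain g where g: "continuous_on {0..1} g" "\<And>t. t \<in> {0..1} \<Longrightarrow> f t = exp (g t)"
    using continuous_log_exists[of "{0..1::real}" f] assms by auto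
  have "log_incr f2 = (Ln c + g 1) - (Ln c + g 0)"
  proof (rule log_incr_eq)
    show "continuous_on {0..1} (\<lambda>t. Ln c + g t)" by (intro continuous_intros g(1))
    fix t :: real assume t: "t \<in> {0..1}"
    show "f2 t = exp (Ln c + g t)" using assms(3) assms(4)[OF t] g(2)[OF t] by (simp add: exp_add)
  qed
  also have "\<dots> = log_incr f" using log_incr_eq[OF g] by simp
  finally show ?thesis .
qed

text \<open>For a path staying in the disc \<open>|w - 1| < 1\<close> the principal logarithm is continuous.\<close>

lemma log_incr_small:
  assumes "continuous_on {0..1} f" "\<And>t. t \<in> {0..1} \<Longrightarrow> cmod (f t - 1) < 1"
  shows "log_incr f = Ln (f 1) - Ln (f 0)"
proof (rule log_incr_eq)
  have nn: "f t \<notin> \<real>\<^sub>\<le>\<^sub>0" if "t \<in> {0..1}" for t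
  proof
    assume "f t \<in> \<real>\<^sub>\<le>\<^sub>0"
    then have "Re (f t) \<le> 0" by (auto simp: nonpos_Reals_def)
    moreover have "\<bar>Re (f t - 1)\<bar> < 1" using assms(2)[OF that] abs_Re_le_cmod[of "f t - 1"] by linarith
    ultimately show False by simp
  qed
  show "continuous_on {0..1} (\<lambda>t. Ln (f t))"
    by (rule continuous_on_Ln'[OF assms(1)]) (use nn in auto)
  fix t :: real assume t: "t \<in> {0..1}"
  have "f t \<noteq> 0" using nn[OF t] by auto
  then show "f t = exp (Ln (f t))" by simp
qed

definition triangle :: "(real \<times> real) set" where
  "triangle = {p. 0 \<le> fst p \<and> 0 \<le> snd p \<and> fst p + snd p \<le> 1}"

lemma convex_triangle: "convex triangle"
  unfolding convex_def triangle_def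
proof (clarsimp)
  fix a b c d u v :: real
  assume h: "0 \<le> a" "0 \<le> b" "a + b \<le> 1" "0 \<le> c" "0 \<le> d" "c + d \<le> 1" "0 \<le> u" "0 \<le> v" "u + v = 1"
  have "u * (a + b) + v * (c + d) \<le> u * 1 + v * 1"
    using h by (intro add_mono mult_left_mono) auto
  then show "u * a + v * c + (u * b + v * d) \<le> 1" using h by (simp add: algebra_simps)
qed

text \<open>For a nonvanishing continuous function on the triangle, the increments along the
  three edges are additive (the boundary loop has winding number zero).\<close>

lemma log_incr_triangle:
  fixes F :: "real \<times> real \<Rightarrow> complex"
  assumes F: "continuous_on triangle F" "\<And>p. p \<in> triangle \<Longrightarrow> F p \<noteq> 0"
  shows "log_incr (\<lambda>t. F (t, 0)) + log_incr (\<lambda>t. F (1 - t, t)) = log_incr (\<lambda>t. F (0, t))"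
proof -
  obtain g where g: "continuous_on triangle g" "\<And>p. p \<in> triangle \<Longrightarrow> F p = exp (g p)"
    using continuous_log_exists[OF convex_triangle F] by metis
  have p1: "(\<lambda>t::real. (t, 0::real)) ` {0..1} \<subseteq> triangle" by (auto simp: triangle_def)
  have p2: "(\<lambda>t::real. (1 - t, t)) ` {0..1} \<subseteq> triangle" by (auto simp: triangle_def)
  have p3: "(\<lambda>t::real. (0::real, t)) ` {0..1} \<subseteq> triangle" by (auto simp: triangle_def)
  have l1: "log_incr (\<lambda>t. F (t, 0)) = g (1, 0) - g (0, 0)"
  proof (rule log_incr_eq[where g="\<lambda>t. g (t, 0)"])
    show "continuous_on {0..1} (\<lambda>t. g (t, 0))"
      by (rule continuous_on_compose2[OF g(1) _ p1]) (intro continuous_intros)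
  qed (auto simp: triangle_def intro!: g(2))
  have l2: "log_incr (\<lambda>t. F (1 - t, t)) = g (1 - 1, 1) - g (1 - 0, 0)"
  proof (rule log_incr_eq[where g="\<lambda>t. g (1 - t, t)"])
    show "continuous_on {0..1} (\<lambda>t. g (1 - t, t))"
      by (rule continuous_on_compose2[OF g(1) _ p2]) (intro continuous_intros)
  qed (auto simp: triangle_def intro!: g(2))
  have l3: "log_incr (\<lambda>t. F (0, t)) = g (0, 1) - g (0, 0)"
  proof (rule log_incr_eq[where g="\<lambda>t. g (0, t)"])
    show "continuous_on {0..1} (\<lambda>t. g (0, t))"
      by (rule continuous_on_compose2[OF g(1) _ p3]) (intro continuous_intros)
  qed (auto simp: triangle_def intro!: g(2))
  show ?thesis using l1 l2 l3 by simp
qed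


section \<open>Positive q-lower density\<close>

definition count_upto :: "nat \<Rightarrow> nat set \<Rightarrow> nat \<Rightarrow> nat" where
  "count_upto q A N = card {n\<in>A. n \<le> N ^ q}"

lemma q_lower_dens_pos_iff:
  "0 < q_lower_dens q A \<longleftrightarrow> (\<exists>e>0. eventually (\<lambda>N. e \<le> real (count_upto q A N) / real N) sequentially)"
proof
  assume "0 < q_lower_dens q A"
  then have h: "ereal 0 < liminf (\<lambda>N::nat. ereal (real (card {n\<in>A. n \<le> N ^ q}) / real N))"
    by (simp add: q_lower_dens_def zero_ereal_def)
  obtain e where e: "0 < e" "ereal e < liminf (\<lambda>N::nat. ereal (real (card {n\<in>A. n \<le> N ^ q}) / real N))"
  proof (cases "liminf (\<lambda>N::nat. ereal (real (card {n\<in>A. n \<le> N ^ q}) / real N))")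
    case (real r) then show ?thesis using h that[of "r/2"] by auto
  next
    case PInf then show ?thesis using that[of 1] by auto
  next
    case MInf then show ?thesis using h by auto
  qed
  have "eventually (\<lambda>N. ereal e < ereal (real (card {n\<in>A. n \<le> N ^ q}) / real N)) sequentially"
    using less_LiminfD[OF e(2)] by simp
  then have "eventually (\<lambda>N. e \<le> real (count_upto q A N) / real N) sequentially"
    by (rule eventually_mono) (simp add: count_upto_def)
  then show "\<exists>e>0. eventually (\<lambda>N. e \<le> real (count_upto q A N) / real N) sequentially" using e by blast
next
  assume "\<exists>e>0. eventually (\<lambda>N. e \<le> real (count_upto q A N) / real N) sequentially"
  then obtain e where e: "e > 0" "eventually (\<lambda>N. e \<le> real (count_upto q A N) / real N) sequentially" by blast
  have "eventually (\<lambda>N. ereal e \<le> ereal (real (card {n\<in>A. n \<le> N ^ q}) / real N)) sequentially"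
    using e(2) by (rule eventually_mono) (simp add: count_upto_def)
  then have "ereal e \<le> q_lower_dens q A"
    unfolding q_lower_dens_def by (rule Liminf_bounded)
  then show "0 < q_lower_dens q A" using e(1)
    by (metis ereal_less(2) order_less_le_trans zero_ereal_def)
qed


lemma q_lower_dens_bounded_count:
  assumes bound: "\<And>N. count_upto q A N \<le> b"
  shows "\<not> 0 < q_lower_dens q A"
proof
  assume "0 < q_lower_dens q A"
  then obtain e where e: "e > 0" "eventually (\<lambda>N. e \<le> real (count_upto q A N) / real N) sequentially"
    using q_lower_dens_pos_iff by blast
  obtain N0 :: nat where N0: "real N0 > real b / e" using reals_Archimedean2 by blast
  have "eventually (\<lambda>N::nat. N \<ge> N0 + 1) sequentially" by (rule eventually_ge_at_top)
  with e(2) have "eventually (\<lambda>N. False) sequentially"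
  proof eventually_elim
    case (elim N)
    then have Npos: "real N > 0" by simp
    have "e * real N \<le> real (count_upto q A N)" using elim(1) Npos by (simp add: field_simps)
    also have "\<dots> \<le> real b" using bound[of N] by simp
    finally have "e * real N \<le> real b" .
    moreover have "e * real N > e * (real b / e)"
      using N0 elim(2) e(1) by (intro mult_strict_left_mono) auto
    ultimately show False using e(1) by simp
  qed
  then show False by simp
qed

lemma q_lower_dens_empty: "\<not> 0 < q_lower_dens q {}"
  by (rule q_lower_dens_bounded_count[of q "{}" 0]) (simp add: count_upto_def)

lemma q_lower_dens_zero_exponent: "\<not> 0 < q_lower_dens 0 A"
proof (rule q_lower_dens_bounded_count[of 0 A 2])
  fix N
  have "{n\<in>A. n \<le> N ^ 0} \<subseteq> {0..1}" by auto
  then have "card {n\<in>A. n \<le> N ^ 0} \<le> card {0..(1::nat)}" by (intro card_mono) auto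
  then show "count_upto 0 A N \<le> 2" by (simp add: count_upto_def)
qed

lemma q_lower_dens_pos_of_count_bound:
  assumes A: "0 < q_lower_dens q A"
    and bound: "\<And>N. count_upto q A N \<le> c * count_upto q B N + s"
  shows "0 < q_lower_dens q B"
proof -
  obtain e where e: "e > 0" "eventually (\<lambda>N. e \<le> real (count_upto q A N) / real N) sequentially"
    using A q_lower_dens_pos_iff by blast
  obtain N0 :: nat where N0: "real N0 \<ge> 2 * real s / e + 1" using real_arch_simple by blast
  have "eventually (\<lambda>N::nat. N \<ge> N0) sequentially" by (rule eventually_ge_at_top)
  with e(2) have "eventually (\<lambda>N. e / (2 * (c + 1)) \<le> real (count_upto q B N) / real N) sequentially"
  proof eventually_elim
    case (elim N)
    have N: "real N \<ge> 2 * real s / e + 1" using elim(2) N0 by linarith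
    then have Npos: "real N > 0" using e(1) by (smt (verit) divide_nonneg_pos of_nat_0_le_iff)
    have "real s \<le> e * real N / 2"
    proof -
      have "e * (2 * real s / e) \<le> e * real N" using N e(1) by (intro mult_left_mono) auto
      then show ?thesis using e(1) by (simp add: field_simps)
    qed
    moreover have "e * real N \<le> real (count_upto q A N)" using elim(1) Npos by (simp add: field_simps)
    moreover have "real (count_upto q A N) \<le> real c * real (count_upto q B N) + real s"
      using bound[of N] by (metis of_nat_add of_nat_le_iff of_nat_mult)
    moreover have "real c * real (count_upto q B N) \<le> (real c + 1) * real (count_upto q B N)"
      by (simp add: algebra_simps)
    ultimately have "e * real N \<le> 2 * ((real c + 1) * real (count_upto q B N))" by linarith
    then show ?case using Npos e(1) by (simp add: field_simps)
  qed
  moreover have "e / (2 * (c + 1)) > 0" using e(1) by simp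
  ultimately show ?thesis using q_lower_dens_pos_iff by blast
qed

lemma count_upto_transfer:
  fixes g :: "nat \<Rightarrow> nat" and s c :: nat
  assumes gB: "\<And>n. n \<in> A \<Longrightarrow> g n \<in> B \<and> g n \<le> n + s"
    and fib: "\<And>m. finite {n\<in>A. g n = m} \<and> card {n\<in>A. g n = m} \<le> c"
  shows "count_upto q A N \<le> c * count_upto q B N + (s + 1)"
proof -
  let ?M = "N ^ q"
  let ?F = "\<Union>m\<in>{m\<in>B. m \<le> ?M}. {n\<in>A. g n = m}"
  have sub: "{n\<in>A. n \<le> ?M} \<subseteq> ?F \<union> {?M - s..?M}"
  proof
    fix n assume n: "n \<in> {n\<in>A. n \<le> ?M}"
    show "n \<in> ?F \<union> {?M - s..?M}"
      by (cases "n + s \<le> ?M") (use n gB[of n] in auto)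
  qed
  have fin: "finite {m\<in>B. m \<le> ?M}" by auto
  have "card ?F \<le> (\<Sum>m\<in>{m\<in>B. m \<le> ?M}. card {n\<in>A. g n = m})"
    by (rule card_UN_le[OF fin])
  also have "\<dots> \<le> (\<Sum>m\<in>{m\<in>B. m \<le> ?M}. c)"
    by (rule sum_mono) (use fib in blast)
  also have "\<dots> = c * count_upto q B N" by (simp add: count_upto_def)
  finally have cF: "card ?F \<le> c * count_upto q B N" .
  have "count_upto q A N \<le> card (?F \<union> {?M - s..?M})"
    unfolding count_upto_def by (rule card_mono) (use fib fin sub in auto)
  also have "\<dots> \<le> card ?F + card {?M - s..?M}" by (rule card_Un_le)
  finally show ?thesis using cF by simp
qed

lemma q_lower_dens_transfer:
  fixes g :: "nat \<Rightarrow> nat" and s c :: nat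
  assumes A: "0 < q_lower_dens q A"
    and gB: "\<And>n. n \<in> A \<Longrightarrow> g n \<in> B \<and> g n \<le> n + s"
    and fib: "\<And>m. finite {n\<in>A. g n = m} \<and> card {n\<in>A. g n = m} \<le> c"
  shows "0 < q_lower_dens q B"
  by (rule q_lower_dens_pos_of_count_bound[OF A count_upto_transfer[OF gB fib]])

text \<open>Positive density is preserved by the dilation \<open>m \<mapsto> p m\<close> (for \<open>q \<ge> 1\<close>):
  \<open>p m \<le> N\<^sup>q\<close> whenever \<open>m \<le> (N div p)\<^sup>q\<close>.\<close>

lemma count_upto_dilation:
  assumes p: "p \<ge> 1" and q: "q \<ge> 1" and AB: "\<And>m. m \<in> A \<Longrightarrow> p * m \<in> B"
  shows "count_upto q A (N div p) \<le> count_upto q B N"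
proof -
  have "(\<lambda>m. p * m) ` {m\<in>A. m \<le> (N div p) ^ q} \<subseteq> {n\<in>B. n \<le> N ^ q}"
  proof
    fix n assume "n \<in> (\<lambda>m. p * m) ` {m\<in>A. m \<le> (N div p) ^ q}"
    then obtain m where m: "m \<in> A" "m \<le> (N div p) ^ q" "n = p * m" by auto
    have "p * m \<le> p * (N div p) ^ q" using m by simp
    also have "\<dots> \<le> p ^ q * (N div p) ^ q"
      using p q by (intro mult_right_mono) (auto intro: self_le_power)
    also have "\<dots> = (p * (N div p)) ^ q" by (simp add: power_mult_distrib)
    also have "\<dots> \<le> N ^ q" by (intro power_mono) (auto simp: mult.commute)
    finally show "n \<in> {n\<in>B. n \<le> N ^ q}" using m AB by auto
  qed
  moreover have "inj_on (\<lambda>m. p * m) {m\<in>A. m \<le> (N div p) ^ q}" using p by (auto simp: inj_on_def)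
  ultimately show ?thesis unfolding count_upto_def
    by (metis (no_types, lifting) card_image card_mono finite_nat_set_iff_bounded_le mem_Collect_eq)
qed

lemma q_lower_dens_dilation:
  fixes p :: nat
  assumes A: "0 < q_lower_dens q A" and p: "p \<ge> 1" and q: "q \<ge> 1"
    and AB: "\<And>m. m \<in> A \<Longrightarrow> p * m \<in> B"
  shows "0 < q_lower_dens q B"
proof -
  obtain e where e: "e > 0" "eventually (\<lambda>N. e \<le> real (count_upto q A N) / real N) sequentially"
    using A q_lower_dens_pos_iff by blast
  have lim: "filterlim (\<lambda>N::nat. N div p) at_top sequentially"
    unfolding filterlim_at_top eventually_sequentially
  proof (intro allI exI allI impI)
    fix Z N :: nat assume "p * Z \<le> N"
    then show "Z \<le> N div p" using p by (simp add: less_eq_div_iff_mult_less_eq mult.commute)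
  qed
  have e2: "eventually (\<lambda>N. e \<le> real (count_upto q A (N div p)) / real (N div p)) sequentially"
    using filterlim_iff[THEN iffD1, OF lim, rule_format, OF e(2)] by simp
  have "eventually (\<lambda>N::nat. N \<ge> 2 * p) sequentially" by (rule eventually_ge_at_top)
  with e2 have "eventually (\<lambda>N. e / (2 * p) \<le> real (count_upto q B N) / real N) sequentially"
  proof eventually_elim
    case (elim N)
    have dp: "N div p \<ge> 2" using elim(2) p
      by (simp add: less_eq_div_iff_mult_less_eq mult.commute)
    have "real N \<le> real p * real (N div p) + real p"
    proof -
      have "N mod p < p" using p by simp
      moreover have "N = p * (N div p) + N mod p" by simp
      ultimately have "N < p * (N div p) + p" by linarith
      then show ?thesis by (metis of_nat_add of_nat_less_iff of_nat_mult less_imp_le)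
    qed
    moreover have "real N \<ge> 2 * real p" using elim(2) by linarith
    ultimately have r: "real N / (2 * real p) \<le> real (N div p)" using p by (simp add: field_simps)
    have "e * real (N div p) \<le> real (count_upto q A (N div p))" using elim(1) dp by (simp add: field_simps)
    also have "\<dots> \<le> real (count_upto q B N)" using count_upto_dilation[OF p q AB] by simp
    finally have "e * (real N / (2 * real p)) \<le> real (count_upto q B N)"
      using r e(1) by (meson mult_left_mono order.trans less_imp_le)
    then show ?case using p elim(2) by (simp add: field_simps)
  qed
  moreover have "e / (2 * p) > 0" using e(1) p by simp
  ultimately show ?thesis using q_lower_dens_pos_iff by blast
qed

text \<open>The induced map \<open>n \<mapsto> m\<close> moves
  points forward by at most \<open>\<Sum>S\<close> and has fibres of size at most \<open>card S\<close>.\<close>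

lemma q_lower_dens_shift_transfer:
  fixes p :: nat and S :: "nat set"
  assumes A: "0 < q_lower_dens q A" and p: "p \<ge> 1" and S: "finite S"
    and shift: "\<And>n. n \<in> A \<Longrightarrow> \<exists>s\<in>S. p dvd (n + s) \<and> (n + s) div p \<in> B"
  shows "0 < q_lower_dens q B"
proof -
  define sh where "sh n = (SOME s. s \<in> S \<and> p dvd (n + s) \<and> (n + s) div p \<in> B)" for n
  have sh: "sh n \<in> S \<and> p dvd (n + sh n) \<and> (n + sh n) div p \<in> B" if "n \<in> A" for n
    unfolding sh_def by (rule someI_ex) (use shift[OF that] in blast)
  define g where "g n = (n + sh n) div p" for n
  have g: "g n \<in> B \<and> g n \<le> n + sum id S" if n: "n \<in> A" for n
  proof
    show "g n \<in> B" using sh[OF n] by (simp add: g_def)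
    have "g n \<le> n + sh n" using p by (simp add: g_def div_le_dividend)
    also have "sh n \<le> sum id S" using member_le_sum[of "sh n" S id] S sh[OF n] by simp
    finally show "g n \<le> n + sum id S" by simp
  qed
  have fib: "finite {n\<in>A. g n = m} \<and> card {n\<in>A. g n = m} \<le> card S" for m
  proof -
    have sub: "{n\<in>A. g n = m} \<subseteq> (\<lambda>s. p * m - s) ` S"
    proof
      fix n assume "n \<in> {n\<in>A. g n = m}"
      then have n: "n \<in> A" "g n = m" by auto
      then have "p * m = n + sh n" using sh[OF n(1)] by (auto simp: g_def elim!: dvdE)
      then show "n \<in> (\<lambda>s. p * m - s) ` S" using sh[OF n(1)] by force
    qed
    moreover have "finite ((\<lambda>s. p * m - s) ` S)" using S by simp
    moreover have "card ((\<lambda>s. p * m - s) ` S) \<le> card S" by (rule card_image_le[OF S])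
    ultimately show ?thesis using card_mono le_trans finite_subset by metis
  qed
  show ?thesis by (rule q_lower_dens_transfer[OF A g fib])
qed

section \<open>The skew orbit closure\<close>

locale skew_orbit = tvs sc for sc :: "complex \<Rightarrow> 'a::{ab_group_add,topological_space} \<Rightarrow> 'a" +
  fixes T :: "'a \<Rightarrow> 'a" and x :: 'a and lam :: complex
  assumes T: "cont_linear T" and dense: "closure (range (\<lambda>n. (T ^^ n) x)) = UNIV"
    and lam: "cmod lam = 1"
begin

definition skew_closure :: "'a \<Rightarrow> ('a \<times> complex) set" where
  "skew_closure y = closure (range (\<lambda>n. ((T ^^ n) y, lam ^ n)))"

definition Omega :: "('a \<times> complex) set" where
  "Omega = skew_closure x"

lemma closed_Omega: "closed Omega"
  by (simp add: Omega_def skew_closure_def)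

lemma skew_closure_circle:
  assumes "(z, \<nu>) \<in> skew_closure y"
  shows "cmod \<nu> = 1"
proof -
  have "range (\<lambda>n. ((T ^^ n) y, lam ^ n)) \<subseteq> UNIV \<times> sphere 0 1" using lam by (auto simp: norm_power)
  moreover have "closed (UNIV \<times> sphere (0::complex) 1)" by (intro closed_Times closed_sphere) simp
  ultimately have "skew_closure y \<subseteq> UNIV \<times> sphere 0 1"
    unfolding skew_closure_def by (rule closure_minimal)
  then show ?thesis using assms by auto
qed

lemma Omega_circle: "(y, \<mu>) \<in> Omega \<Longrightarrow> cmod \<mu> = 1"
  unfolding Omega_def by (rule skew_closure_circle)

lemma x_one_Omega: "(x, 1) \<in> Omega"
proof -
  have "((T ^^ 0) x, lam ^ 0) \<in> range (\<lambda>n. ((T ^^ n) x, lam ^ n))" by (rule rangeI)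
  then show ?thesis unfolding Omega_def skew_closure_def using closure_subset by fastforce
qed

lemma Omega_step:
  assumes "(z, \<mu>) \<in> Omega"
  shows "(T z, lam * \<mu>) \<in> Omega"
proof -
  let ?S = "\<lambda>w::'a \<times> complex. (T (fst w), lam * snd w)"
  have "?S ` closure (range (\<lambda>n. ((T ^^ n) x, lam ^ n))) \<subseteq> closure (range (\<lambda>n. ((T ^^ n) x, lam ^ n)))"
  proof (rule image_closure_subset)
    have "continuous_on (closure (range (\<lambda>n. ((T ^^ n) x, lam ^ n)))) (\<lambda>w. T (fst w))"
      by (rule continuous_on_compose2[OF cont_linear_cont[OF T] continuous_on_fst[OF continuous_on_id]]) auto
    then show "continuous_on (closure (range (\<lambda>n. ((T ^^ n) x, lam ^ n)))) ?S"
      by (intro continuous_on_Pair continuous_intros)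
    show "?S ` range (\<lambda>n. ((T ^^ n) x, lam ^ n)) \<subseteq> closure (range (\<lambda>n. ((T ^^ n) x, lam ^ n)))"
    proof clarsimp
      fix n
      have "(T ((T ^^ n) x), lam * lam ^ n) = ((T ^^ Suc n) x, lam ^ Suc n)" by simp
      then show "(T ((T ^^ n) x), lam * lam ^ n) \<in> closure (range (\<lambda>n. ((T ^^ n) x, lam ^ n)))"
        by (metis (no_types, lifting) closure_subset rangeI subsetD)
    qed
  qed simp
  then show ?thesis using assms unfolding Omega_def skew_closure_def by force
qed

lemma Omega_iter: "(z, \<mu>) \<in> Omega \<Longrightarrow> ((T ^^ n) z, lam ^ n * \<mu>) \<in> Omega"
proof (induction n)
  case (Suc n)
  then have "(T ((T ^^ n) z), lam * (lam ^ n * \<mu>)) \<in> Omega" by (intro Omega_step) auto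
  then show ?case by (simp add: mult.assoc)
qed simp

lemma skew_closure_rotate:
  assumes orbit: "\<And>n. ((T ^^ n) y, lam ^ n * w) \<in> Omega" and z: "(z, \<nu>) \<in> skew_closure y"
  shows "(z, \<nu> * w) \<in> Omega"
proof -
  let ?R = "\<lambda>p::'a \<times> complex. (fst p, snd p * w)"
  have "?R ` skew_closure y \<subseteq> Omega"
    unfolding skew_closure_def
  proof (rule image_closure_subset)
    show "continuous_on (closure (range (\<lambda>n. ((T ^^ n) y, lam ^ n)))) ?R"
      by (intro continuous_intros)
    show "?R ` range (\<lambda>n. ((T ^^ n) y, lam ^ n)) \<subseteq> Omega" using orbit by auto
  qed (rule closed_Omega)
  then show ?thesis using z by force
qed

lemma Omega_rotate: "(x, w) \<in> Omega \<Longrightarrow> (z, \<nu>) \<in> Omega \<Longrightarrow> (z, \<nu> * w) \<in> Omega"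
  using skew_closure_rotate[of x w z \<nu>] Omega_iter[of x w] unfolding Omega_def by blast

text \<open>For a sequence \<open>u\<close> with dense range, the closure of \<open>{(u n, \<lambda>\<^sup>n)}\<close> has a point above
  every \<open>y\<close> (compactness of the circle, via the tube lemma).\<close>

lemma skew_closure_fiber_gen:
  fixes u :: "nat \<Rightarrow> 'a"
  assumes du: "closure (range u) = UNIV"
  shows "\<exists>\<mu>. (y, \<mu>) \<in> closure (range (\<lambda>n. (u n, lam ^ n)))"
proof (rule ccontr)
  let ?C = "closure (range (\<lambda>n. (u n, lam ^ n)))"
  assume "\<not> ?thesis"
  then have sub: "{y} \<times> sphere 0 1 \<subseteq> - ?C" by blast
  have op: "open (- ?C)" by auto
  obtain X0 where X0: "y \<in> X0" "open X0" "X0 \<times> sphere 0 1 \<subseteq> - ?C"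
    using Elementary_Topology.tube_lemma[OF compact_sphere op sub] by auto
  have "range u \<inter> X0 \<noteq> {}" using dense_meets[OF du X0(2)] X0(1) by blast
  then obtain n where n: "u n \<in> X0" by blast
  have "lam ^ n \<in> sphere 0 1" using lam by (simp add: norm_power)
  then have "(u n, lam ^ n) \<in> - ?C" using n X0(3) by blast
  moreover have "(u n, lam ^ n) \<in> ?C" by (rule closure_subset[THEN subsetD]) simp
  ultimately show False by simp
qed

lemma Omega_fiber: "\<exists>\<mu>. (y, \<mu>) \<in> Omega"
  unfolding Omega_def skew_closure_def by (rule skew_closure_fiber_gen[OF dense])

lemma circle_monoid_phases: "circle_monoid {w. (x, w) \<in> Omega}"
proof
  have "closed ((\<lambda>w. (x, w)) -` Omega)"
    by (rule continuous_closed_vimage) (auto simp: closed_Omega intro!: continuous_intros)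
  then show "closed {w. (x, w) \<in> Omega}" by (simp add: vimage_def)
  show "{w. (x, w) \<in> Omega} \<subseteq> sphere 0 1" using Omega_circle by auto
  show "1 \<in> {w. (x, w) \<in> Omega}" using x_one_Omega by simp
  show "a * b \<in> {w. (x, w) \<in> Omega}" if "a \<in> {w. (x, w) \<in> Omega}" "b \<in> {w. (x, w) \<in> Omega}" for a b
    using Omega_rotate[of a x b] that by (simp add: mult.commute)
qed

definition returns_to_x :: "'a \<Rightarrow> bool" where
  "returns_to_x y \<longleftrightarrow> (\<exists>\<nu>. (x, \<nu>) \<in> skew_closure y)"

lemma returns_to_x_rotation:
  assumes "returns_to_x y"
  obtains \<nu> where "\<nu> \<noteq> 0" "\<And>\<mu>. (y, \<mu>) \<in> Omega \<Longrightarrow> (x, \<nu> * \<mu>) \<in> Omega"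
proof -
  obtain \<nu> where \<nu>: "(x, \<nu>) \<in> skew_closure y" using assms returns_to_x_def by blast
  have "\<nu> \<noteq> 0" using skew_closure_circle[OF \<nu>] by auto
  moreover have "(x, \<nu> * \<mu>) \<in> Omega" if "(y, \<mu>) \<in> Omega" for \<mu>
    by (rule skew_closure_rotate[OF Omega_iter[OF that] \<nu>])
  ultimately show ?thesis using that by blast
qed

text \<open>Every \<open>p(T) x\<close> with \<open>p \<noteq> 0\<close> has dense orbit, hence returns to \<open>x\<close>.\<close>

lemma returns_to_x_poly_op:
  assumes p: "p \<noteq> 0"
  shows "returns_to_x (poly_op T p x)"
proof -
  have "closure (range (\<lambda>n. poly_op T p ((T ^^ n) x))) = UNIV"
    by (rule dense_range_comp[OF poly_op_dense_range[OF T dense p] dense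
          cont_linear_cont[OF cont_linear_poly_op[OF T]]])
  then have "closure (range (\<lambda>n. (T ^^ n) (poly_op T p x))) = UNIV"
    by (simp add: poly_op_funpow[OF T])
  from skew_closure_fiber_gen[OF this, of x] show ?thesis
    unfolding returns_to_x_def skew_closure_def by blast
qed

definition tri_vec :: "nat \<Rightarrow> real \<times> real \<Rightarrow> 'a" where
  "tri_vec j p = sc (of_real (1 - fst p - snd p)) x + sc (of_real (fst p)) ((T ^^ j) x)
           + sc (of_real (snd p)) ((T ^^ Suc j) x)"

lemma cont_tri_vec: "continuous_on S (tri_vec j)"
  unfolding tri_vec_def by (intro cont_add cont_sc continuous_intros)

lemma tri_vec_shift: "tri_vec j (0, t) = tri_vec (Suc j) (t, 0)"
  by (simp add: tri_vec_def)

lemma tri_vec_funpow: "tri_vec j (1 - t, t) = (T ^^ j) (tri_vec 1 (t, 0))"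
proof -
  have Tj: "cont_linear (T ^^ j)" by (rule cont_linear_funpow[OF T])
  have comp: "(T ^^ j) ((T ^^ i) z) = (T ^^ (j + i)) z" for i z
    by (simp add: funpow_add)
  show ?thesis
    by (simp add: tri_vec_def cont_linear_add[OF Tj] cont_linear_sc[OF Tj] comp funpow_swap1)
qed

text \<open>Points of the triangle (for \<open>j \<ge> 1\<close>) are values \<open>p(T) x\<close> of nonzero polynomials.\<close>

lemma returns_to_x_tri_vec:
  assumes j: "j \<ge> 1" and p: "p \<in> triangle"
  shows "returns_to_x (tri_vec j p)"
proof -
  define P where "P = monom (complex_of_real (1 - fst p - snd p)) 0 + monom (of_real (fst p)) j
    + monom (of_real (snd p)) (Suc j)"
  have "tri_vec j p = poly_op T P x"
    by (simp add: P_def poly_op_add poly_op_monom tri_vec_def)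
  moreover have "P \<noteq> 0"
  proof
    assume P0: "P = 0"
    have "coeff P 0 = of_real (1 - fst p - snd p)" "coeff P j = of_real (fst p)"
      "coeff P (Suc j) = of_real (snd p)"
      using j by (simp_all add: P_def coeff_monom)
    then show False using P0 by simp
  qed
  ultimately show ?thesis using returns_to_x_poly_op by simp
qed

lemma dense_orbit_Suc: "closure (range (\<lambda>n. (T ^^ Suc n) x)) = UNIV"
proof -
  have "closure (range (\<lambda>y. T y - sc 0 y)) = UNIV" by (rule dense_range_shift[OF T dense])
  then have dT: "closure (range T) = UNIV" by simp
  have "closure (range (\<lambda>n. T ((T ^^ n) x))) = UNIV"
    by (rule dense_range_comp[OF dT dense cont_linear_cont[OF T]])
  then show ?thesis by simp
qed

end

section \<open>The Leon-Saavedra--Mueller argument: \<open>(x, \<lambda>) \<in> \<Omega>\<close>\<close>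

text \<open>Suppose all phases of \<open>\<Omega>\<close> above \<open>x\<close> are \<open>k\<close>-th roots of unity.  Then on vectors
  returning to \<open>x\<close> the \<open>k\<close>-th power of a phase above \<open>y\<close> does not depend on the choice of
  the phase, and gives a continuous unimodular function \<open>phase\<close>.\<close>

locale skew_orbit_roots = skew_orbit +
  fixes k :: nat
  assumes phases_roots: "\<And>w. (x, w) \<in> Omega \<Longrightarrow> w ^ k = 1"
begin

definition phase :: "'a \<Rightarrow> complex" where
  "phase y = (SOME \<mu>. (y, \<mu>) \<in> Omega) ^ k"

lemma some_phase_Omega: "(y, SOME \<mu>. (y, \<mu>) \<in> Omega) \<in> Omega"
  using someI_ex[OF Omega_fiber[of y]] .

lemma norm_phase: "cmod (phase y) = 1"
  unfolding phase_def using Omega_circle[OF some_phase_Omega] by (simp add: norm_power)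

lemma phase_nonzero: "phase y \<noteq> 0"
  using norm_phase[of y] by auto

lemma phase_eq:
  assumes y: "returns_to_x y" and m: "(y, \<mu>) \<in> Omega"
  shows "phase y = \<mu> ^ k"
proof -
  obtain \<nu> where \<nu>: "\<nu> \<noteq> 0" "\<And>\<mu>. (y, \<mu>) \<in> Omega \<Longrightarrow> (x, \<nu> * \<mu>) \<in> Omega"
    using returns_to_x_rotation[OF y] by blast
  define \<mu>0 where "\<mu>0 = (SOME \<mu>. (y, \<mu>) \<in> Omega)"
  have m0: "(y, \<mu>0) \<in> Omega" unfolding \<mu>0_def by (rule some_phase_Omega)
  have "(\<nu> * \<mu>) ^ k = 1" "(\<nu> * \<mu>0) ^ k = 1"
    by (rule phases_roots[OF \<nu>(2)[OF m]], rule phases_roots[OF \<nu>(2)[OF m0]])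
  then have "\<nu> ^ k * \<mu> ^ k = \<nu> ^ k * \<mu>0 ^ k" by (simp add: power_mult_distrib)
  then have "\<mu> ^ k = \<mu>0 ^ k" using \<nu>(1) by simp
  then show ?thesis by (simp add: phase_def \<mu>0_def)
qed

lemma phase_funpow:
  assumes "returns_to_x ((T ^^ j) y)"
  shows "phase ((T ^^ j) y) = (lam ^ j) ^ k * phase y"
proof -
  define \<mu>0 where "\<mu>0 = (SOME \<mu>. (y, \<mu>) \<in> Omega)"
  have m0: "(y, \<mu>0) \<in> Omega" unfolding \<mu>0_def by (rule some_phase_Omega)
  have "phase ((T ^^ j) y) = (lam ^ j * \<mu>0) ^ k"
    by (rule phase_eq[OF assms Omega_iter[OF m0]])
  then show ?thesis by (simp add: phase_def \<mu>0_def power_mult_distrib)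
qed

text \<open>Continuity of \<open>phase\<close> at vectors returning to \<open>x\<close>: by the tube lemma, the closed set
  \<open>\<Omega>\<close> avoids \<open>W \<times> C\<close>, where \<open>C\<close> is the compact set of unimodular \<open>\<mu>\<close> whose \<open>k\<close>-th power
  is \<open>e\<close>-far from \<open>phase y\<^sub>0\<close>.\<close>

lemma phase_continuous_at:
  assumes y0: "returns_to_x y0" and e: "e > 0"
  shows "\<exists>W. open W \<and> y0 \<in> W \<and> (\<forall>y\<in>W. cmod (phase y - phase y0) < e)"
proof -
  define C where "C = sphere (0::complex) 1 \<inter> {\<mu>. e \<le> cmod (\<mu> ^ k - phase y0)}"
  have cC: "compact C" unfolding C_def
    by (intro compact_Int_closed compact_sphere closed_Collect_le continuous_intros)
  have "{y0} \<times> C \<subseteq> - Omega"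
  proof clarsimp
    fix \<mu> assume "\<mu> \<in> C" "(y0, \<mu>) \<in> Omega"
    then have "phase y0 = \<mu> ^ k" "e \<le> cmod (\<mu> ^ k - phase y0)"
      using phase_eq[OF y0] by (auto simp: C_def)
    then show False using e by simp
  qed
  then obtain W where W: "y0 \<in> W" "open W" "W \<times> C \<subseteq> - Omega"
    using Elementary_Topology.tube_lemma[OF cC] closed_Omega by (metis open_Compl)
  show ?thesis
  proof (intro exI conjI ballI)
    fix y assume y: "y \<in> W"
    define \<mu>0 where "\<mu>0 = (SOME \<mu>. (y, \<mu>) \<in> Omega)"
    have m0: "(y, \<mu>0) \<in> Omega" unfolding \<mu>0_def by (rule some_phase_Omega)
    have n0: "\<mu>0 \<in> sphere 0 1" using Omega_circle[OF m0] by simp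
    show "cmod (phase y - phase y0) < e"
    proof (rule ccontr)
      assume "\<not> cmod (phase y - phase y0) < e"
      then have "\<mu>0 \<in> C" using n0 by (simp add: C_def phase_def \<mu>0_def)
      then show False using W(3) y m0 by blast
    qed
  qed (use W in auto)
qed

lemma phase_continuous_on:
  fixes h :: "'b::topological_space \<Rightarrow> 'a"
  assumes h: "continuous_on UNIV h" and returns: "\<And>p. p \<in> S \<Longrightarrow> returns_to_x (h p)"
  shows "continuous_on S (\<lambda>p. phase (h p))"
  unfolding continuous_on_topological
proof (intro ballI allI impI)
  fix p B assume p: "p \<in> S" and B: "open B" "phase (h p) \<in> B"
  obtain e where e: "e > 0" "ball (phase (h p)) e \<subseteq> B" using B openE by metis
  obtain W where W: "open W" "h p \<in> W" "\<And>y. y \<in> W \<Longrightarrow> cmod (phase y - phase (h p)) < e"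
    using phase_continuous_at[OF returns[OF p] e(1)] by blast
  have "phase (h q) \<in> B" if "q \<in> h -` W" for q
  proof -
    have "cmod (phase (h q) - phase (h p)) < e" using W(3) that by simp
    then show ?thesis using e(2) by (auto simp: dist_norm norm_minus_commute)
  qed
  moreover have "open (h -` W)" by (rule open_vimage[OF W(1) h])
  ultimately show "\<exists>A. open A \<and> p \<in> A \<and> (\<forall>q\<in>S. q \<in> A \<longrightarrow> phase (h q) \<in> B)"
    using W(2) by blast
qed

lemma phase_continuous_triangle:
  assumes "j \<ge> 1"
  shows "continuous_on triangle (\<lambda>p. phase (tri_vec j p))"
  by (rule phase_continuous_on[OF cont_tri_vec returns_to_x_tri_vec[OF assms]])

lemma phase_continuous_segment:
  assumes "j \<ge> 1"
  shows "continuous_on {0..1} (\<lambda>t. phase (tri_vec j (t, 0)))"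
  by (rule continuous_on_compose2[OF phase_continuous_triangle[OF assms]])
     (auto simp: triangle_def intro!: continuous_intros)

definition winding :: "nat \<Rightarrow> complex" where
  "winding j = log_incr (\<lambda>t. phase (tri_vec j (t, 0)))"

text \<open>Along the triangle \<open>x, T\<^sup>j x, T\<^sup>j\<^sup>+\<^sup>1 x\<close> the edge from \<open>T\<^sup>j x\<close> to \<open>T\<^sup>j\<^sup>+\<^sup>1 x\<close> is the image
  under \<open>T\<^sup>j\<close> of the first segment, on which \<open>phase\<close> only changes by the constant factor
  \<open>\<lambda>\<^sup>j\<^sup>k\<close>.  Hence \<open>w\<^sub>j\<^sub>+\<^sub>1 = w\<^sub>j + w\<^sub>1\<close> and \<open>w\<^sub>j = j w\<^sub>1\<close>.\<close>

lemma winding_Suc: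
  assumes j: "j \<ge> 1"
  shows "winding (Suc j) = winding j + winding 1"
proof -
  have tri: "log_incr (\<lambda>t. phase (tri_vec j (t, 0))) + log_incr (\<lambda>t. phase (tri_vec j (1 - t, t)))
      = log_incr (\<lambda>t. phase (tri_vec j (0, t)))"
    by (rule log_incr_triangle[OF phase_continuous_triangle[OF j]]) (rule phase_nonzero)
  have "log_incr (\<lambda>t. phase (tri_vec j (1 - t, t))) = winding 1"
    unfolding winding_def
  proof (rule log_incr_cmult[OF phase_continuous_segment[of 1]])
    show "(lam ^ j) ^ k \<noteq> 0" using lam by auto
    fix t :: real assume t: "t \<in> {0..1}"
    have "returns_to_x (tri_vec j (1 - t, t))"
      by (rule returns_to_x_tri_vec[OF j]) (use t in \<open>auto simp: triangle_def\<close>)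
    then show "phase (tri_vec j (1 - t, t)) = (lam ^ j) ^ k * phase (tri_vec 1 (t, 0))"
      unfolding tri_vec_funpow by (rule phase_funpow)
  qed (simp_all add: phase_nonzero)
  then show ?thesis using tri by (simp add: winding_def tri_vec_shift)
qed

lemma winding_linear: "n \<ge> 1 \<Longrightarrow> winding n = of_nat n * winding 1"
proof (induction n rule: dec_induct)
  case (step n)
  then show ?case using winding_Suc[of n] by (simp add: algebra_simps)
qed simp

lemma phase_x: "phase x = 1"
proof -
  have "returns_to_x (tri_vec 1 (0, 0))" by (rule returns_to_x_tri_vec) (auto simp: triangle_def)
  then show ?thesis using phase_eq[OF _ x_one_Omega] by (simp add: tri_vec_def)
qed

text \<open>The first winding is a logarithm of \<open>\<lambda>\<^sup>k\<close>, since \<open>phase (T x) = \<lambda>\<^sup>k phase x\<close>.\<close>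

lemma exp_winding_one: "exp (winding 1) = lam ^ k"
proof -
  have "returns_to_x (tri_vec 1 (1, 0))" by (rule returns_to_x_tri_vec) (auto simp: triangle_def)
  then have phase_Tx: "phase (T x) = lam ^ k"
    using phase_eq[OF _ Omega_step[OF x_one_Omega]] by (simp add: tri_vec_def)
  have "exp (winding 1) = phase (tri_vec 1 (1, 0)) / phase (tri_vec 1 (0, 0))"
    unfolding winding_def by (rule log_incr_exp[OF phase_continuous_segment]) (simp_all add: phase_nonzero)
  also have "\<dots> = lam ^ k" by (simp add: tri_vec_def phase_x phase_Tx)
  finally show ?thesis .
qed

text \<open>Near \<open>x\<close>, \<open>phase\<close> is close to \<open>1\<close>.  Choosing \<open>T\<^sup>N x\<close> close to \<open>x\<close> (the orbit is dense),
  the whole segment from \<open>x\<close> to \<open>T\<^sup>N x\<close> is mapped close to \<open>1\<close> (tube lemma on \<open>{x} \<times> [0,1]\<close>).\<close>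

lemma phase_near_one_on_segment:
  assumes \<eta>: "\<eta> > 0"
  shows "\<exists>N\<ge>1. \<forall>t\<in>{0..1}. cmod (phase (tri_vec N (t, 0)) - 1) < \<eta>"
proof -
  have "returns_to_x (tri_vec 1 (0, 0))" by (rule returns_to_x_tri_vec) (auto simp: triangle_def)
  then have "returns_to_x x" by (simp add: tri_vec_def)
  then obtain W where W: "open W" "x \<in> W" "\<And>y. y \<in> W \<Longrightarrow> cmod (phase y - 1) < \<eta>"
    using phase_continuous_at[OF _ \<eta>] phase_x by metis
  define Q where "Q p = sc (of_real (1 - snd p)) x + sc (of_real (snd p)) (fst p)" for p :: "'a \<times> real"
  have "open (Q -` W)"
    by (rule open_vimage[OF W(1)]) (simp add: Q_def cont_add cont_sc continuous_intros)
  moreover have "{x} \<times> {0..1} \<subseteq> Q -` W"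
    using W(2) by (auto simp: Q_def scale_left_distrib[symmetric])
  ultimately obtain V where V: "x \<in> V" "open V" "V \<times> {0..1} \<subseteq> Q -` W"
    using Elementary_Topology.tube_lemma[OF compact_Icc] by metis
  obtain n where n: "(T ^^ Suc n) x \<in> V"
    using dense_meets[OF dense_orbit_Suc V(2)] V(1) by blast
  have "cmod (phase (tri_vec (Suc n) (t, 0)) - 1) < \<eta>" if t: "t \<in> {0..1}" for t
  proof -
    have "Q ((T ^^ Suc n) x, t) \<in> W" using V(3) n t by blast
    moreover have "Q ((T ^^ Suc n) x, t) = tri_vec (Suc n) (t, 0)" by (simp add: Q_def tri_vec_def)
    ultimately show ?thesis using W(3) by simp
  qed
  then show ?thesis by (intro exI[of _ "Suc n"]) auto
qed

text \<open>Consequently windings \<open>w\<^sub>N\<close> (\<open>N \<ge> 1\<close>) become arbitrarily small: on the disc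
  \<open>|w - 1| < \<eta>\<close> the principal logarithm is a continuous logarithm with small values.\<close>

lemma winding_small:
  assumes r: "r > 0"
  shows "\<exists>N\<ge>1. cmod (winding N) < r"
proof -
  have "isCont Ln 1" by (rule continuous_at_Ln) (auto simp: nonpos_Reals_def)
  then have "Ln \<midarrow>1\<rightarrow> 0" by (simp add: isCont_def)
  then obtain d where d: "d > 0" "\<And>w. w \<noteq> 1 \<and> norm (w - 1) < d \<Longrightarrow> norm (Ln w - 0) < r / 2"
    using LIM_D[of Ln 0 1 "r / 2"] r by auto
  define \<eta> where "\<eta> = min d 1"
  have Ln_small: "cmod (Ln w) < r / 2" if "cmod (w - 1) < \<eta>" for w
    using d(2)[of w] that r by (cases "w = 1") (auto simp: \<eta>_def)
  obtain N where N: "N \<ge> 1" "\<And>t. t \<in> {0..1} \<Longrightarrow> cmod (phase (tri_vec N (t, 0)) - 1) < \<eta>"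
    using phase_near_one_on_segment[of \<eta>] d(1) by (auto simp: \<eta>_def)
  have "winding N = Ln (phase (tri_vec N (1, 0))) - Ln (phase (tri_vec N (0, 0)))"
    unfolding winding_def
    by (rule log_incr_small[OF phase_continuous_segment[OF N(1)]])
       (use N(2) in \<open>force simp: \<eta>_def\<close>)
  also have "cmod \<dots> < r / 2 + r / 2"
    using norm_triangle_ineq4[of "Ln (phase (tri_vec N (1, 0)))" "Ln (phase (tri_vec N (0, 0)))"]
      Ln_small[OF N(2)[of 1]] Ln_small[OF N(2)[of 0]] by simp
  finally show ?thesis using N(1) by auto
qed

end

context skew_orbit
begin

text \<open>Otherwise the phases above \<open>x\<close> are \<open>k\<close>-th roots of unity with \<open>\<lambda>\<^sup>k \<noteq> 1\<close>, so
  \<open>w\<^sub>1 \<noteq> 0\<close>; but \<open>|w\<^sub>N| = N |w\<^sub>1| \<ge> |w\<^sub>1|\<close> for all \<open>N \<ge> 1\<close>, contradicting \<open>winding_small\<close>.\<close>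

theorem lam_in_Omega: "(x, lam) \<in> Omega"
proof (rule ccontr)
  assume "(x, lam) \<notin> Omega"
  then obtain k where k: "k \<ge> 1" "\<And>w. (x, w) \<in> Omega \<Longrightarrow> w ^ k = 1" "lam ^ k \<noteq> 1"
    using circle_monoid.separating_root_order[OF circle_monoid_phases lam] by auto
  interpret R: skew_orbit_roots sc T x lam k
    by unfold_locales (use k(2) in auto)
  have "R.winding 1 \<noteq> 0" using R.exp_winding_one k(3) by auto
  then obtain N where N: "N \<ge> 1" "cmod (R.winding N) < cmod (R.winding 1)"
    using R.winding_small[of "cmod (R.winding 1)"] by auto
  have "cmod (R.winding 1) \<le> real N * cmod (R.winding 1)"
    using N(1) mult_right_mono[of 1 "real N" "cmod (R.winding 1)"] by simp
  also have "\<dots> = cmod (R.winding N)" using R.winding_linear[OF N(1)] by (simp add: norm_mult)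
  finally show False using N(2) by simp
qed

end

section \<open>Visiting properties of the skew orbit\<close>

context skew_orbit
begin

lemma lam_powers_Omega: "(x, lam ^ n) \<in> Omega"
proof (induction n)
  case 0 then show ?case using x_one_Omega by simp
next
  case (Suc n)
  have "(x, lam ^ n * lam) \<in> Omega" by (rule Omega_rotate[OF lam_in_Omega Suc])
  then show ?case by (simp add: mult.commute)
qed

text \<open>\<open>\<Omega>\<close> contains \<open>(y, \<lambda>\<^sup>n)\<close> for every \<open>y\<close> and \<open>n\<close>: the phases above \<open>x\<close> form a closed
  group \<open>G\<close> containing all powers of \<open>\<lambda>\<close>, \<open>\<Omega> \<subseteq> X \<times> G\<close>, and \<open>G\<close> acts on \<open>\<Omega>\<close> by rotation.\<close>

lemma Omega_full: "(y, lam ^ n) \<in> Omega"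
proof -
  define G where "G = {w. (x, w) \<in> Omega}"
  interpret G: circle_monoid G unfolding G_def by (rule circle_monoid_phases)
  obtain \<mu> where \<mu>: "(y, \<mu>) \<in> Omega" using Omega_fiber by blast
  have "Omega \<subseteq> UNIV \<times> G"
    unfolding Omega_def skew_closure_def
  proof (rule closure_minimal)
    show "range (\<lambda>n. ((T ^^ n) x, lam ^ n)) \<subseteq> UNIV \<times> G" using lam_powers_Omega by (auto simp: G_def)
    show "closed (UNIV \<times> G)" using G.closed_H by (intro closed_Times) auto
  qed
  then have "inverse \<mu> \<in> G" using \<mu> G.inverse_H by auto
  then have "inverse \<mu> * lam ^ n \<in> G" using G.mult_H lam_powers_Omega by (simp add: G_def)
  then have "(y, \<mu> * (inverse \<mu> * lam ^ n)) \<in> Omega" using Omega_rotate[OF _ \<mu>] by (simp add: G_def)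
  moreover have "\<mu> \<noteq> 0" using Omega_circle[OF \<mu>] by auto
  ultimately show ?thesis by (simp add: mult.assoc[symmetric])
qed

lemma Omega_visit:
  assumes "open Op" "(y, \<mu>) \<in> Omega" "(y, \<mu>) \<in> Op"
  shows "\<exists>s. ((T ^^ s) x, lam ^ s) \<in> Op"
proof -
  have "Op \<inter> Omega \<noteq> {}" using assms by blast
  then have "Op \<inter> range (\<lambda>n. ((T ^^ n) x, lam ^ n)) \<noteq> {}"
    unfolding Omega_def skew_closure_def using open_Int_closure_eq_empty[OF assms(1)] by blast
  then show ?thesis by blast
qed

text \<open>By compactness of the circle and the tube lemma, finitely many times \<open>s\<close>
  suffice uniformly for all \<open>\<phi>\<close> and all starting points \<open>z\<close> near \<open>x\<close>.\<close>

lemma rotated_orbit_visits: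
  assumes \<phi>: "cmod \<phi> = 1" and U: "open U" "y0 \<in> U"
  shows "\<exists>s. sc (\<phi> * lam ^ s) ((T ^^ s) x) \<in> U"
proof -
  define Op where "Op = (\<lambda>p::'a \<times> complex. sc (\<phi> * snd p) (fst p)) -` U"
  have "open Op" unfolding Op_def by (rule open_vimage[OF U(1)]) (intro cont_sc continuous_intros)
  moreover have "\<phi> \<noteq> 0" using \<phi> by auto
  then have "(sc (inverse \<phi>) y0, 1) \<in> Op" using U(2) by (simp add: Op_def)
  moreover have "(sc (inverse \<phi>) y0, 1) \<in> Omega" using Omega_full[of _ 0] by simp
  ultimately obtain s where "((T ^^ s) x, lam ^ s) \<in> Op" using Omega_visit by blast
  then show ?thesis by (auto simp: Op_def)
qed

lemma rotated_orbit_uniform_visits: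
  fixes U :: "'a set"
  assumes U: "open U" "U \<noteq> {}"
  obtains S V where "finite S" "open V" "x \<in> V"
    "\<And>z \<phi>. z \<in> V \<Longrightarrow> cmod \<phi> = 1 \<Longrightarrow> \<exists>s\<in>S. sc (\<phi> * lam ^ s) ((T ^^ s) z) \<in> U"
proof -
  define Op where "Op s = (\<lambda>p::'a \<times> complex. sc (snd p * lam ^ s) ((T ^^ s) (fst p))) -` U" for s
  have open_Op: "open (Op s)" for s
    unfolding Op_def
    by (rule open_vimage[OF U(1)])
       (intro cont_sc continuous_intros continuous_on_compose2[OF cont_linear_cont[OF cont_linear_funpow[OF T]]], auto)
  have "{x} \<times> sphere 0 1 \<subseteq> (\<Union>s. Op s)"
    using rotated_orbit_visits U by (fastforce simp: Op_def)
  then obtain S where S: "finite S" "{x} \<times> sphere 0 1 \<subseteq> (\<Union>s\<in>S. Op s)"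
    using compactE_image[OF compact_Times[OF compact_sing compact_sphere], of UNIV Op] open_Op
    by (metis subset_UNIV)
  moreover have "open (\<Union>s\<in>S. Op s)" using open_Op by auto
  ultimately obtain V where V: "x \<in> V" "open V" "V \<times> sphere 0 1 \<subseteq> (\<Union>s\<in>S. Op s)"
    using Elementary_Topology.tube_lemma[OF compact_sphere] by metis
  have "\<exists>s\<in>S. sc (\<phi> * lam ^ s) ((T ^^ s) z) \<in> U" if "z \<in> V" "cmod \<phi> = 1" for z \<phi>
  proof -
    have "(z, \<phi>) \<in> V \<times> sphere 0 1" using that by simp
    then have "(z, \<phi>) \<in> (\<Union>s\<in>S. Op s)" using V(3) by blast
    then show ?thesis by (auto simp: Op_def)
  qed
  then show ?thesis using that S(1) V(1,2) by blast
qed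

lemma periodic_orbit_visits:
  assumes p: "p \<ge> 1" and lp: "lam ^ p = 1" and U: "open U" "y0 \<in> U"
  shows "\<exists>s. (T ^^ s) x \<in> U \<and> lam ^ s = lam ^ r"
proof -
  define R where "R = {z::complex. z ^ p = 1}"
  have "finite R" unfolding R_def using p by (intro finite_roots_unity) auto
  then have "open (U \<times> (- (R - {lam ^ r})))" using U(1) by (intro open_Times open_Compl finite_imp_closed) auto
  then obtain s where s: "((T ^^ s) x, lam ^ s) \<in> U \<times> (- (R - {lam ^ r}))"
    using Omega_visit Omega_full U(2) by blast
  have "lam ^ s \<in> R" unfolding R_def using lp by (simp flip: power_mult add: mult.commute power_mult)
  then show ?thesis using s by auto
qed

end

section \<open>q-frequently hypercyclic vectors of rotations and powers\<close>

context tvs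
begin

lemma qFHC_return_dens:
  "x \<in> qFHC q S \<Longrightarrow> open U \<Longrightarrow> U \<noteq> {} \<Longrightarrow> 0 < q_lower_dens q {n. (S ^^ n) x \<in> U}"
  by (simp add: qFHC_def)

lemma qFHC_dense_orbit:
  assumes x: "x \<in> qFHC q S"
  shows "closure (range (\<lambda>n. (S ^^ n) x)) = UNIV"
proof (rule ccontr)
  let ?U = "- closure (range (\<lambda>n. (S ^^ n) x))"
  assume "closure (range (\<lambda>n. (S ^^ n) x)) \<noteq> UNIV"
  then have "open ?U" "?U \<noteq> {}" by auto
  then have "0 < q_lower_dens q {n. (S ^^ n) x \<in> ?U}" by (rule qFHC_return_dens[OF x])
  moreover have "(S ^^ n) x \<in> closure (range (\<lambda>n. (S ^^ n) x))" for n
    by (rule closure_subset[THEN subsetD], rule rangeI)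
  then have "{n. (S ^^ n) x \<in> ?U} = {}" by simp
  ultimately show False using q_lower_dens_empty by simp
qed

lemma qFHC_exponent_pos:
  assumes x: "x \<in> qFHC q S"
  shows "q \<ge> 1"
proof (rule ccontr)
  assume "\<not> q \<ge> 1"
  then have "q = 0" by simp
  moreover have "0 < q_lower_dens q {n. (S ^^ n) x \<in> UNIV}" by (rule qFHC_return_dens[OF x]) auto
  ultimately show False using q_lower_dens_zero_exponent by simp
qed

lemma rotation_funpow: "cont_linear T \<Longrightarrow> ((\<lambda>y. sc c (T y)) ^^ m) z = sc (c ^ m) ((T ^^ m) z)"
  by (induction m) (auto simp: cont_linear_sc)

lemma cont_linear_rotation:
  assumes T: "cont_linear T"
  shows "cont_linear (\<lambda>y. sc c (T y))"
proof -
  have "sc c (T (a + b)) = sc c (T a) + sc c (T b)" for a b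
    by (simp add: cont_linear_add[OF T] scale_right_distrib)
  moreover have "sc c (T (sc d a)) = sc d (sc c (T a))" for d a
    by (simp add: cont_linear_sc[OF T] mult.commute)
  moreover have "continuous_on UNIV (\<lambda>y. sc c (T y))"
    by (rule cont_sc[OF continuous_on_const cont_linear_cont[OF T]])
  ultimately show ?thesis by (simp add: cont_linear_def)
qed

text \<open>For open \<open>U\<close>, finitely many shifts \<open>S\<close> and an open
  \<open>V \<ni> x\<close> are chosen so that from \<open>T\<^sup>n x \<in> V\<close> some \<open>(cT)\<^sup>n\<^sup>+\<^sup>s x = c\<^sup>n c\<^sup>s T\<^sup>s (T\<^sup>n x)\<close>
  with \<open>s \<in> S\<close> lies in \<open>U\<close>; positive density of returns to \<open>V\<close> is then transferred.\<close>

lemma qFHC_rotation: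
  assumes T: "cont_linear T" and c: "cmod c = 1" and x: "x \<in> qFHC q T"
  shows "x \<in> qFHC q (\<lambda>y. sc c (T y))"
  unfolding qFHC_def
proof (intro CollectI allI impI)
  fix U :: "'a set" assume U: "open U \<and> U \<noteq> {}"
  interpret skew_orbit sc T x c
    by unfold_locales (use T c qFHC_dense_orbit[OF x] in auto)
  obtain S V where S: "finite S" and V: "open V" "x \<in> V"
    and visit: "\<And>z \<phi>. z \<in> V \<Longrightarrow> cmod \<phi> = 1 \<Longrightarrow> \<exists>s\<in>S. sc (\<phi> * c ^ s) ((T ^^ s) z) \<in> U"
    using rotated_orbit_uniform_visits[of U] U by blast
  have A: "0 < q_lower_dens q {n. (T ^^ n) x \<in> V}" using qFHC_return_dens[OF x] V by blast
  show "0 < q_lower_dens q {n. ((\<lambda>y. sc c (T y)) ^^ n) x \<in> U}"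
  proof (rule q_lower_dens_shift_transfer[OF A order.refl S])
    fix n assume "n \<in> {n. (T ^^ n) x \<in> V}"
    then obtain s where s: "s \<in> S" "sc (c ^ n * c ^ s) ((T ^^ s) ((T ^^ n) x)) \<in> U"
      using visit[of "(T ^^ n) x" "c ^ n"] c by (auto simp: norm_power)
    have "(T ^^ s) ((T ^^ n) x) = (T ^^ (n + s)) x"
      by (simp add: funpow_add add.commute[of n s])
    then have "n + s \<in> {n. ((\<lambda>y. sc c (T y)) ^^ n) x \<in> U}"
      using s(2) by (simp add: rotation_funpow[OF T] power_add)
    then show "\<exists>s\<in>S. 1 dvd (n + s) \<and> (n + s) div 1 \<in> {n. ((\<lambda>y. sc c (T y)) ^^ n) x \<in> U}"
      using s(1) by auto
  qed
qed

lemma qFHC_rotation_eq: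
  assumes T: "cont_linear T" and c: "cmod c = 1"
  shows "qFHC q T = qFHC q (\<lambda>y. sc c (T y))"
proof
  show "qFHC q T \<subseteq> qFHC q (\<lambda>y. sc c (T y))" using qFHC_rotation[OF T c] by blast
  show "qFHC q (\<lambda>y. sc c (T y)) \<subseteq> qFHC q T"
  proof
    fix y assume "y \<in> qFHC q (\<lambda>y. sc c (T y))"
    moreover have "cmod (cnj c) = 1" using c by simp
    ultimately have "y \<in> qFHC q (\<lambda>z. sc (cnj c) (sc c (T z)))"
      by (rule qFHC_rotation[OF cont_linear_rotation[OF T], rotated])
    moreover have "cnj c * c = 1" using c complex_norm_square[of c] by (simp add: mult.commute)
    then have "(\<lambda>z. sc (cnj c) (sc c (T z))) = T" by simp
    ultimately show "y \<in> qFHC q T" by simp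
  qed
qed

lemma root_of_unity_power_eq:
  fixes p :: nat
  assumes p: "p \<ge> 1" and eq: "cis (2 * pi / p) ^ a = cis (2 * pi / p) ^ b"
  shows "a mod p = b mod p"
proof -
  have pow: "cis (2 * pi / p) ^ k = cis (2 * pi * real k / real p)" for k
    unfolding Complex.DeMoivre by (simp add: field_simps)
  have mod: "cis (2 * pi / p) ^ a = cis (2 * pi / p) ^ (a mod p)" for a
  proof -
    have "cis (2 * pi / p) ^ a = (cis (2 * pi / p) ^ p) ^ (a div p) * cis (2 * pi / p) ^ (a mod p)"
      by (metis div_mult_mod_eq power_add power_mult mult.commute)
    then show ?thesis using p by (simp add: pow)
  qed
  have "inj_on (\<lambda>k. cis (2 * pi * real k / real p)) {..<p}"
    using Complex.bij_betw_roots_unity[of p] p by (simp add: bij_betw_def)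
  moreover have "a mod p \<in> {..<p}" "b mod p \<in> {..<p}" using p by auto
  moreover have "cis (2 * pi * real (a mod p) / real p) = cis (2 * pi * real (b mod p) / real p)"
    using eq mod[of a] mod[of b] by (simp add: pow)
  ultimately show ?thesis by (auto dest: inj_onD)
qed

text \<open>With \<open>\<omega> = e\<^sup>2\<^sup>\<pi>\<^sup>i\<^sup>/\<^sup>p\<close>, the orbit of \<open>x\<close> visits \<open>U\<close> at times \<open>s\<^sub>r\<close> in every
  residue class \<open>r\<close> modulo \<open>p\<close>.  From \<open>T\<^sup>n x\<close> in the neighbourhood \<open>V = \<Inter>\<^sub>r (T\<^sup>s\<^sub>r)\<^sup>-\<^sup>1 U\<close> of \<open>x\<close>,
  the shift \<open>s\<^sub>r\<close> with \<open>n + s\<^sub>r \<equiv> 0 (mod p)\<close> gives a return of \<open>T\<^sup>p\<close> to \<open>U\<close>.\<close>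

lemma qFHC_power:
  assumes T: "cont_linear T" and p: "p \<ge> 1" and x: "x \<in> qFHC q T"
  shows "x \<in> qFHC q (T ^^ p)"
  unfolding qFHC_def
proof (intro CollectI allI impI)
  fix U :: "'a set" assume U: "open U \<and> U \<noteq> {}"
  then obtain y0 where y0: "y0 \<in> U" by blast
  define \<omega> where "\<omega> = cis (2 * pi / p)"
  have \<omega>p: "\<omega> ^ p = 1" using p unfolding \<omega>_def Complex.DeMoivre by simp
  interpret skew_orbit sc T x \<omega>
    by unfold_locales (use T qFHC_dense_orbit[OF x] in \<open>auto simp: \<omega>_def\<close>)
  have "\<exists>s. (T ^^ s) x \<in> U \<and> s mod p = r mod p" for r
  proof -
    obtain s where "(T ^^ s) x \<in> U" "\<omega> ^ s = \<omega> ^ r"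
      using periodic_orbit_visits[OF p \<omega>p U[THEN conjunct1] y0] by blast
    then show ?thesis using root_of_unity_power_eq[OF p] unfolding \<omega>_def by blast
  qed
  then have "\<exists>sr. \<forall>r. (T ^^ sr r) x \<in> U \<and> sr r mod p = r mod p" by (rule choice[OF allI])
  then obtain sr where sr: "\<And>r. (T ^^ sr r) x \<in> U" "\<And>r. sr r mod p = r mod p" by blast
  define V where "V = (\<Inter>r\<in>{..<p}. (T ^^ sr r) -` U)"
  have "open V" unfolding V_def
    using open_vimage[OF U[THEN conjunct1] cont_linear_cont[OF cont_linear_funpow[OF T]]] by auto
  moreover have "x \<in> V" using sr by (simp add: V_def)
  ultimately have A: "0 < q_lower_dens q {n. (T ^^ n) x \<in> V}" using qFHC_return_dens[OF x] by blast
  show "0 < q_lower_dens q {m. ((T ^^ p) ^^ m) x \<in> U}"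
  proof (rule q_lower_dens_shift_transfer[OF A p finite_imageI[OF finite_lessThan]])
    fix n assume n: "n \<in> {n. (T ^^ n) x \<in> V}"
    define r where "r = (p - n mod p) mod p"
    have r: "r < p" using p by (simp add: r_def)
    have "(n + sr r) mod p = (n mod p + sr r mod p) mod p" by (rule mod_add_eq[symmetric])
    also have "\<dots> = (n mod p + r mod p) mod p" by (simp only: sr(2))
    also have "\<dots> = 0" using p by (cases "n mod p = 0") (auto simp: r_def le_imp_diff_is_add)
    finally have dvd: "p dvd (n + sr r)" by (simp add: dvd_eq_mod_eq_0)
    have "((T ^^ p) ^^ ((n + sr r) div p)) x = (T ^^ (n + sr r)) x"
      using dvd by (simp add: funpow_mult)
    also have "\<dots> = (T ^^ sr r) ((T ^^ n) x)" by (simp add: funpow_add add.commute[of n])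
    finally have "(n + sr r) div p \<in> {m. ((T ^^ p) ^^ m) x \<in> U}"
      using n r by (simp add: V_def)
    then show "\<exists>s\<in>sr ` {..<p}. p dvd (n + s) \<and> (n + s) div p \<in> {m. ((T ^^ p) ^^ m) x \<in> U}"
      using dvd r by blast
  qed
qed

text \<open>\<open>qFHC(T\<^sup>p) \<subseteq> qFHC(T)\<close>: returns of \<open>T\<^sup>p\<close> at \<open>m\<close> are returns of \<open>T\<close> at \<open>p m\<close>.\<close>

lemma qFHC_of_power:
  fixes T :: "'a \<Rightarrow> 'a"
  assumes p: "p \<ge> 1" and x: "x \<in> qFHC q (T ^^ p)"
  shows "x \<in> qFHC q T"
  unfolding qFHC_def
proof (intro CollectI allI impI)
  fix U :: "'a set" assume U: "open U \<and> U \<noteq> {}"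
  have "0 < q_lower_dens q {m. ((T ^^ p) ^^ m) x \<in> U}" using qFHC_return_dens[OF x] U by blast
  then show "0 < q_lower_dens q {n. (T ^^ n) x \<in> U}"
    by (rule q_lower_dens_dilation[OF _ p qFHC_exponent_pos[OF x]]) (simp add: funpow_mult)
qed

lemma qFHC_power_eq:
  assumes T: "cont_linear T" and p: "p \<ge> 1"
  shows "qFHC q T = qFHC q (T ^^ p)"
  using qFHC_power[OF T p] qFHC_of_power[OF p] by blast

end

theorem theorem5p2:
  fixes sc :: "complex \<Rightarrow> 'a::{ab_group_add,topological_space} \<Rightarrow> 'a"
    and T :: "'a \<Rightarrow> 'a" and q :: nat
  assumes "complex_tvs sc"
    and "separable_type TYPE('a)"
    and "cont_lin_op sc T"
    and "q_freq_hypercyclic q T"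
  shows "\<forall>(c::complex) (p::nat). cmod c = 1 \<and> p \<ge> 1 \<longrightarrow>
           q_freq_hypercyclic q (\<lambda>x. sc c (T x))
         \<and> q_freq_hypercyclic q (T ^^ p)
         \<and> qFHC q T = qFHC q (\<lambda>x. sc c (T x))
         \<and> qFHC q T = qFHC q (T ^^ p)"
proof (intro allI impI)
  fix c :: complex and p :: nat
  assume cp: "cmod c = 1 \<and> p \<ge> 1"
  interpret tvs sc by (rule tvs_of_complex_tvs[OF assms(1)])
  have T: "cont_linear T" by (rule cont_linear_of_cont_lin_op[OF assms(3)])
  have rot: "qFHC q T = qFHC q (\<lambda>x. sc c (T x))" using qFHC_rotation_eq[OF T] cp by blast
  have pow: "qFHC q T = qFHC q (T ^^ p)" using qFHC_power_eq[OF T] cp by blast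
  show "q_freq_hypercyclic q (\<lambda>x. sc c (T x)) \<and> q_freq_hypercyclic q (T ^^ p)
      \<and> qFHC q T = qFHC q (\<lambda>x. sc c (T x)) \<and> qFHC q T = qFHC q (T ^^ p)"
    using rot pow assms(4) by (simp add: q_freq_hypercyclic_def)
qed
end
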